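(* Assume $\delta_s\ge\delta_M$, let $\theta>0$ satisfy $\mathcal R(\theta)<1$, and let $\alpha>0$, $\beta_s>0$. Then $\mathbf 0\in\mathcal D'$ is globally asymptotically stable in $\mathcal D'=[0,+\infty)^4$ (in the Filippov sense) for the closed-loop system $$\dot E=\beta_E F\Big(1-\frac EK\Big)-(\nu_E+\delta_E)E,\quad \dot M=(1-\nu)\nu_E E-\delta_M M,\quad \dot F=\nu\nu_E E\frac{M}{M+\gamma_sM_s}-\delta_F F,\quad \dot M_s=u(E,M,F,M_s)-\delta_sM_s,$$ where $u=\max(0,G)$ is the feedback defined below.
   Context: Parameters: $\beta_E,\nu_E,\delta_E,\delta_M,\delta_F,\delta_s,K>0$, $\nu\in(0,1)$, $\gamma_s\in(0,1]$. $\mathcal R_0:=\dfrac{\beta_E\nu\nu_E}{\delta_F(\nu_E+\delta_E)}$, $\mathcal R(\theta):=\dfrac{\mathcal R_0}{1+\gamma_s\theta}$, $\psi:=\dfrac{2\beta_E\nu\nu_E}{\delta_F(1-\mathcal R(\theta))(1+\gamma_s\theta)}$. Define $G:\mathcal D'\to\mathbb R$ by $G=0$ if $M+M_s=0$ and otherwise $$G=\frac{\gamma_s\psi E(\theta M+M_s)^2}{\alpha(M+\gamma_sM_s)(3\theta M+M_s)}+\frac{\big((1-\nu)\nu_E\theta E-\theta\delta_MM\big)(\theta M+3M_s)}{3\theta M+M_s}+\delta_sM_s+\frac{\beta_s}{\alpha}(\theta M-M_s),$$ and $u:=\max(0,G)$ (so $u\ge0$, $u\in L^\infty_{loc}(\mathcal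 D')$). With $X(z)$ the closed-loop right-hand side (its value on the null set $\{M=M_s=0\}$ being irrelevant), Filippov solutions are locally Lipschitz curves $z:I\to\mathcal D'$ such that for a.e. $t$, $\dot z(t)\in\bigcap_{\varepsilon>0}\bigcap_{N}\overline{\mathrm{conv}}\,X\big(((z(t)+\varepsilon B)\cap\mathcal D')\setminus N\big)$, with $B$ the unit ball of $\mathbb R^4$ and $N$ ranging over Lebesgue-null sets. $\mathbf 0$ is globally asymptotically stable in $\mathcal S\subset\mathcal D'$ if (stability) for every $\varepsilon>0$ there is $\delta>0$ such that every Filippov solution with $z(0)\in\mathcal S$, $\|z(0)\|<\delta$ satisfies $\|z(t)\|<\varepsilon$ for all $t>0$, and (attractivity) every Filippov solution with $z(0)\in\mathcal S$ tends to $\mathbf 0$. *)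

theory Defs
  imports "HOL-Analysis.Analysis"
begin

text \<open>State z = (E, M, F, M_s) in real^4, with E = z$1, M = z$2, F = z$3, M_s = z$4.\<close>

definition vec4 :: "real \<Rightarrow> real \<Rightarrow> real \<Rightarrow> real \<Rightarrow> real ^ 4" where
  "vec4 a b c d = (\<chi> i. if i = 1 then a else if i = 2 then b else if i = 3 then c else d)"

definition Dprime :: "(real ^ 4) set" where
  "Dprime = {z. \<forall>i. 0 \<le> z $ i}"

definition R0 :: "real \<Rightarrow> real \<Rightarrow> real \<Rightarrow> real \<Rightarrow> real \<Rightarrow> real" where
  "R0 \<beta>E \<nu> \<nu>E \<delta>E \<delta>F = (\<beta>E * \<nu> * \<nu>E) / (\<delta>F * (\<nu>E + \<delta>E))"

definition Rtheta :: "real \<Rightarrow> real \<Rightarrow> real \<Rightarrow> real \<Rightarrow> real \<Rightarrow> real \<Rightarrow> real \<Rightarrow> real" where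
  "Rtheta \<beta>E \<nu> \<nu>E \<delta>E \<delta>F \<gamma>s \<theta> = R0 \<beta>E \<nu> \<nu>E \<delta>E \<delta>F / (1 + \<gamma>s * \<theta>)"

definition psi :: "real \<Rightarrow> real \<Rightarrow> real \<Rightarrow> real \<Rightarrow> real \<Rightarrow> real \<Rightarrow> real \<Rightarrow> real" where
  "psi \<beta>E \<nu> \<nu>E \<delta>E \<delta>F \<gamma>s \<theta> =
     (2 * \<beta>E * \<nu> * \<nu>E) /
     (\<delta>F * (1 - Rtheta \<beta>E \<nu> \<nu>E \<delta>E \<delta>F \<gamma>s \<theta>) * (1 + \<gamma>s * \<theta>))"

definition Gfb :: "real \<Rightarrow> real \<Rightarrow> real \<Rightarrow> real \<Rightarrow> real \<Rightarrow> real \<Rightarrow> real \<Rightarrow> real \<Rightarrow> real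
     \<Rightarrow> real \<Rightarrow> real \<Rightarrow> real ^ 4 \<Rightarrow> real" where
  "Gfb \<beta>E \<nu>E \<delta>E \<delta>M \<delta>F \<delta>s \<nu> \<gamma>s \<theta> \<alpha> \<beta>s z =
     (let E = z $ 1; M = z $ 2; Ms = z $ 4;
          \<psi> = psi \<beta>E \<nu> \<nu>E \<delta>E \<delta>F \<gamma>s \<theta> in
      if M + Ms = 0 then 0 else
        \<gamma>s * \<psi> * E * (\<theta> * M + Ms)\<^sup>2 / (\<alpha> * (M + \<gamma>s * Ms) * (3 * \<theta> * M + Ms))
        + ((1 - \<nu>) * \<nu>E * \<theta> * E - \<theta> * \<delta>M * M) * (\<theta> * M + 3 * Ms) / (3 * \<theta> * M + Ms)
        + \<delta>s * Ms + (\<beta>s / \<alpha>) * (\<theta> * M - Ms))"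

definition ufb :: "real \<Rightarrow> real \<Rightarrow> real \<Rightarrow> real \<Rightarrow> real \<Rightarrow> real \<Rightarrow> real \<Rightarrow> real \<Rightarrow> real
     \<Rightarrow> real \<Rightarrow> real \<Rightarrow> real ^ 4 \<Rightarrow> real" where
  "ufb \<beta>E \<nu>E \<delta>E \<delta>M \<delta>F \<delta>s \<nu> \<gamma>s \<theta> \<alpha> \<beta>s z =
     max 0 (Gfb \<beta>E \<nu>E \<delta>E \<delta>M \<delta>F \<delta>s \<nu> \<gamma>s \<theta> \<alpha> \<beta>s z)"

text \<open>Closed-loop right-hand side X(z). (Its value where M + gamma_s M_s = 0 is irrelevant;
  Isabelle's division by zero gives 0 there.)\<close>
definition Xcl :: "real \<Rightarrow> real \<Rightarrow> real \<Rightarrow> real \<Rightarrow> real \<Rightarrow> real \<Rightarrow> real \<Rightarrow> real \<Rightarrow> real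
     \<Rightarrow> real \<Rightarrow> real \<Rightarrow> real \<Rightarrow> real ^ 4 \<Rightarrow> real ^ 4" where
  "Xcl \<beta>E \<nu>E \<delta>E \<delta>M \<delta>F \<delta>s K \<nu> \<gamma>s \<theta> \<alpha> \<beta>s z =
     (let E = z $ 1; M = z $ 2; F = z $ 3; Ms = z $ 4 in
      vec4 (\<beta>E * F * (1 - E / K) - (\<nu>E + \<delta>E) * E)
           ((1 - \<nu>) * \<nu>E * E - \<delta>M * M)
           (\<nu> * \<nu>E * E * (M / (M + \<gamma>s * Ms)) - \<delta>F * F)
           (ufb \<beta>E \<nu>E \<delta>E \<delta>M \<delta>F \<delta>s \<nu> \<gamma>s \<theta> \<alpha> \<beta>s z - \<delta>s * Ms))"

definition filippov_set :: "(real ^ 4) set \<Rightarrow> (real ^ 4 \<Rightarrow> real ^ 4) \<Rightarrow> real ^ 4 \<Rightarrow> (real ^ 4) set" where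
  "filippov_set D X x =
     (\<Inter>e\<in>{0<..}. \<Inter>N\<in>null_sets lebesgue. closure (convex hull (X ` ((ball x e \<inter> D) - N))))"

definition filippov_solution :: "(real ^ 4) set \<Rightarrow> (real ^ 4 \<Rightarrow> real ^ 4) \<Rightarrow> (real \<Rightarrow> real ^ 4) \<Rightarrow> bool" where
  "filippov_solution D X z \<longleftrightarrow>
     (\<forall>t\<ge>0. z t \<in> D) \<and>
     (\<forall>t\<ge>0. \<exists>e>0. \<exists>L. L-lipschitz_on ({0..} \<inter> cball t e) z) \<and>
     (AE t in lborel. 0 \<le> t \<longrightarrow>
        (\<exists>v. (z has_vector_derivative v) (at t within {0..}) \<and> v \<in> filippov_set D X (z t)))"

definition filippov_GAS :: "(real ^ 4) set \<Rightarrow> (real ^ 4 \<Rightarrow> real ^ 4) \<Rightarrow> (real ^ 4) set \<Rightarrow> bool" where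
  "filippov_GAS D X S \<longleftrightarrow>
     (\<forall>\<epsilon>>0. \<exists>\<delta>>0. \<forall>z. filippov_solution D X z \<and> z 0 \<in> S \<and> norm (z 0) < \<delta> \<longrightarrow>
         (\<forall>t>0. norm (z t) < \<epsilon>)) \<and>
     (\<forall>z. filippov_solution D X z \<and> z 0 \<in> S \<longrightarrow> (z \<longlongrightarrow> 0) at_top)"

end

theory Submission
  imports Defs "HOL-Real_Asymp.Real_Asymp"
begin

text \<open>The function
  \<open>V = c\<^sub>E E + c\<^sub>F F + \<alpha> (\<theta> M - M\<^sub>s)\<^sup>2 / (\<theta> M + M\<^sub>s)\<close>, with \<open>c\<^sub>E = 2 / (1 - \<R>(\<theta>))\<close> and
  \<open>c\<^sub>F = c\<^sub>E \<beta>\<^sub>E / \<delta>\<^sub>F\<close>, is a Lyapunov function: the feedback \<open>G\<close> is designed so that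
  \<open>dV/dt \<le> -2 (\<nu>\<^sub>E + \<delta>\<^sub>E) E\<close> along the flow, the truncation \<open>u = max 0 G\<close> only being active
  when \<open>\<theta> M < M\<^sub>s\<close>, where it helps because \<open>\<delta>\<^sub>s \<ge> \<delta>\<^sub>M\<close>. The field is continuous on the orthant
  except on the face \<open>M = M\<^sub>s = 0\<close>, and a solution staying in the orthant can only sit on that
  face at the equilibrium, so Filippov solutions are classical almost everywhere; being locally
  Lipschitz, \<open>V\<close> then decreases along them. Hence \<open>E\<close> and \<open>F\<close> are bounded by \<open>V(z(0))\<close>, while
  \<open>M\<close> and \<open>M\<^sub>s\<close> obey linear differential inequalities driven by \<open>E\<close> and \<open>M\<close>; this gives a linear
  bound \<open>\<parallel>z(t)\<parallel> \<le> k \<parallel>z(0)\<parallel>\<close>, i.e. stability. For attractivity, \<open>E\<close> cannot drop fast, so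
  every time \<open>E \<ge> \<epsilon>\<close> the function \<open>V\<close> loses a fixed amount, which happens only finitely
  often; thus \<open>E \<rightarrow> 0\<close>, and then \<open>M\<close>, \<open>F\<close>, \<open>M\<^sub>s\<close> follow by comparison.\<close>

section \<open>Differential inequalities for pointwise Lipschitz functions\<close>

text \<open>Only differences with the base point are controlled. This is what a locally Lipschitz
  solution composed with a locally Lipschitz function provides, and it suffices for the
  negligible-image argument below.\<close>
definition pointwise_lipschitz_on :: "(real \<Rightarrow> real) \<Rightarrow> real set \<Rightarrow> bool" where
  "pointwise_lipschitz_on h S \<longleftrightarrow>
     (\<forall>x\<in>S. \<exists>T B. open T \<and> x \<in> T \<and> (\<forall>y\<in>S \<inter> T. \<bar>h y - h x\<bar> \<le> B * \<bar>y - x\<bar>))"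

lemma pointwise_lipschitz_on_subset:
  assumes "pointwise_lipschitz_on h S" "T \<subseteq> S"
  shows "pointwise_lipschitz_on h T"
  unfolding pointwise_lipschitz_on_def
proof
  fix x assume "x \<in> T"
  then obtain U B where "open U" "x \<in> U" "\<forall>y\<in>S \<inter> U. \<bar>h y - h x\<bar> \<le> B * \<bar>y - x\<bar>"
    using assms unfolding pointwise_lipschitz_on_def by blast
  with assms(2) show "\<exists>U B. open U \<and> x \<in> U \<and> (\<forall>y\<in>T \<inter> U. \<bar>h y - h x\<bar> \<le> B * \<bar>y - x\<bar>)"
    by blast
qed

lemma pointwise_lipschitz_on_uminus:
  assumes "pointwise_lipschitz_on h S"
  shows "pointwise_lipschitz_on (\<lambda>x. - h x) S"
proof -
  have "\<bar>- h y - - h x\<bar> = \<bar>h y - h x\<bar>" for x y by linarith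
  with assms show ?thesis unfolding pointwise_lipschitz_on_def by simp
qed

lemma pointwise_lipschitz_on_imp_continuous_on:
  assumes "pointwise_lipschitz_on h S"
  shows "continuous_on S h"
  unfolding continuous_on_iff
proof (intro ballI allI impI)
  fix x e assume x: "x \<in> S" and e: "(0::real) < e"
  obtain T B where T: "open T" "x \<in> T" and B: "\<forall>y\<in>S \<inter> T. \<bar>h y - h x\<bar> \<le> B * \<bar>y - x\<bar>"
    using assms x unfolding pointwise_lipschitz_on_def by blast
  obtain r where r: "r > 0" "ball x r \<subseteq> T" using T openE by blast
  define d where "d = min r (e / (\<bar>B\<bar> + 1))"
  show "\<exists>d>0. \<forall>y\<in>S. dist y x < d \<longrightarrow> dist (h y) (h x) < e"
  proof (intro exI[of _ d] conjI ballI impI)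
    show "d > 0" using r e by (simp add: d_def)
    fix y assume y: "y \<in> S" "dist y x < d"
    then have "y \<in> S \<inter> T" using r(2) by (auto simp: d_def dist_commute)
    then have "\<bar>h y - h x\<bar> \<le> B * \<bar>y - x\<bar>" using B by blast
    also have "\<dots> \<le> \<bar>B\<bar> * \<bar>y - x\<bar>" by (simp add: mult_right_mono)
    also have "\<dots> \<le> \<bar>B\<bar> * (e / (\<bar>B\<bar> + 1))"
      using y(2) by (intro mult_left_mono) (auto simp: d_def dist_real_def)
    also have "\<dots> < e" using e by (simp add: field_simps)
    finally show "dist (h y) (h x) < e" by (simp add: dist_real_def)
  qed
qed

lemma pointwise_lipschitz_on_add:
  assumes f: "pointwise_lipschitz_on f S" and g: "pointwise_lipschitz_on g S"
  shows "pointwise_lipschitz_on (\<lambda>x. f x + g x) S"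
  unfolding pointwise_lipschitz_on_def
proof
  fix x assume x: "x \<in> S"
  obtain T1 B1 where T1: "open T1" "x \<in> T1" and B1: "\<forall>y\<in>S \<inter> T1. \<bar>f y - f x\<bar> \<le> B1 * \<bar>y - x\<bar>"
    using f x unfolding pointwise_lipschitz_on_def by blast
  obtain T2 B2 where T2: "open T2" "x \<in> T2" and B2: "\<forall>y\<in>S \<inter> T2. \<bar>g y - g x\<bar> \<le> B2 * \<bar>y - x\<bar>"
    using g x unfolding pointwise_lipschitz_on_def by blast
  have "\<bar>f y + g y - (f x + g x)\<bar> \<le> (B1 + B2) * \<bar>y - x\<bar>" if "y \<in> S \<inter> (T1 \<inter> T2)" for y
  proof -
    have "\<bar>f y + g y - (f x + g x)\<bar> \<le> \<bar>f y - f x\<bar> + \<bar>g y - g x\<bar>" by linarith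
    also have "\<dots> \<le> (B1 + B2) * \<bar>y - x\<bar>" using B1 B2 that by (simp add: distrib_right add_mono)
    finally show ?thesis .
  qed
  then show "\<exists>T B. open T \<and> x \<in> T \<and> (\<forall>y\<in>S \<inter> T. \<bar>f y + g y - (f x + g x)\<bar> \<le> B * \<bar>y - x\<bar>)"
    using T1 T2 by (intro exI[of _ "T1 \<inter> T2"] exI[of _ "B1 + B2"]) auto
qed

lemma pointwise_lipschitz_on_mult:
  assumes f: "pointwise_lipschitz_on f S" and g: "pointwise_lipschitz_on g S"
  shows "pointwise_lipschitz_on (\<lambda>x. f x * g x) S"
  unfolding pointwise_lipschitz_on_def
proof
  fix x assume x: "x \<in> S"
  obtain T1 B1 where T1: "open T1" "x \<in> T1" and B1: "\<forall>y\<in>S \<inter> T1. \<bar>f y - f x\<bar> \<le> B1 * \<bar>y - x\<bar>"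
    using f x unfolding pointwise_lipschitz_on_def by blast
  obtain T2 B2 where T2: "open T2" "x \<in> T2" and B2: "\<forall>y\<in>S \<inter> T2. \<bar>g y - g x\<bar> \<le> B2 * \<bar>y - x\<bar>"
    using g x unfolding pointwise_lipschitz_on_def by blast
  define T where "T = T1 \<inter> T2 \<inter> ball x 1"
  define B where "B = (\<bar>f x\<bar> + \<bar>B1\<bar>) * \<bar>B2\<bar> + \<bar>g x\<bar> * \<bar>B1\<bar>"
  have "\<bar>f y * g y - f x * g x\<bar> \<le> B * \<bar>y - x\<bar>" if y: "y \<in> S \<inter> T" for y
  proof -
    have yx: "\<bar>y - x\<bar> \<le> 1" using y by (auto simp: T_def dist_real_def)
    have "\<bar>f y - f x\<bar> \<le> B1 * \<bar>y - x\<bar>" "\<bar>g y - g x\<bar> \<le> B2 * \<bar>y - x\<bar>"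
      using B1 B2 y by (auto simp: T_def)
    moreover have "B1 * \<bar>y - x\<bar> \<le> \<bar>B1\<bar> * \<bar>y - x\<bar>" "B2 * \<bar>y - x\<bar> \<le> \<bar>B2\<bar> * \<bar>y - x\<bar>"
      by (simp_all add: mult_right_mono)
    ultimately have hf: "\<bar>f y - f x\<bar> \<le> \<bar>B1\<bar> * \<bar>y - x\<bar>" and hg: "\<bar>g y - g x\<bar> \<le> \<bar>B2\<bar> * \<bar>y - x\<bar>"
      by linarith+
    have fy: "\<bar>f y\<bar> \<le> \<bar>f x\<bar> + \<bar>B1\<bar>"
      using hf mult_left_le[OF yx, of "\<bar>B1\<bar>"] by linarith
    have "\<bar>f y * g y - f x * g x\<bar> = \<bar>f y * (g y - g x) + g x * (f y - f x)\<bar>"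
      by (simp add: algebra_simps)
    also have "\<dots> \<le> \<bar>f y\<bar> * \<bar>g y - g x\<bar> + \<bar>g x\<bar> * \<bar>f y - f x\<bar>"
      by (metis abs_mult abs_triangle_ineq)
    also have "\<dots> \<le> (\<bar>f x\<bar> + \<bar>B1\<bar>) * (\<bar>B2\<bar> * \<bar>y - x\<bar>) + \<bar>g x\<bar> * (\<bar>B1\<bar> * \<bar>y - x\<bar>)"
      by (intro add_mono mult_mono fy hg hf mult_left_mono) auto
    also have "\<dots> = B * \<bar>y - x\<bar>" by (simp add: B_def algebra_simps)
    finally show ?thesis .
  qed
  moreover have "open T" "x \<in> T" using T1 T2 by (auto simp: T_def)
  ultimately show "\<exists>T B. open T \<and> x \<in> T \<and> (\<forall>y\<in>S \<inter> T. \<bar>f y * g y - f x * g x\<bar> \<le> B * \<bar>y - x\<bar>)"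
    by blast
qed

lemma pointwise_lipschitz_on_differentiable:
  assumes "\<And>x. x \<in> S \<Longrightarrow> g differentiable at x"
  shows "pointwise_lipschitz_on g S"
  unfolding pointwise_lipschitz_on_def
proof
  fix x assume "x \<in> S"
  then obtain d where "(g has_real_derivative d) (at x)"
    using assms real_differentiable_def by blast
  then have "((\<lambda>y. (g y - g x) / (y - x)) \<longlongrightarrow> d) (at x)"
    by (simp add: has_field_derivative_iff)
  then have "eventually (\<lambda>y. dist ((g y - g x) / (y - x)) d < 1) (at x)"
    by (rule tendstoD) simp
  then obtain T where T: "open T" "x \<in> T"
    and near: "\<And>y. y \<in> T \<Longrightarrow> y \<noteq> x \<Longrightarrow> dist ((g y - g x) / (y - x)) d < 1"
    unfolding eventually_at_topological by blast
  have "\<bar>g y - g x\<bar> \<le> (\<bar>d\<bar> + 1) * \<bar>y - x\<bar>" if "y \<in> T" for y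
  proof (cases "y = x")
    case False
    then have "\<bar>(g y - g x) / (y - x) - d\<bar> < 1"
      using near[OF that] by (simp add: dist_real_def)
    then have "\<bar>(g y - g x) / (y - x)\<bar> \<le> \<bar>d\<bar> + 1" by arith
    then have "\<bar>g y - g x\<bar> / \<bar>y - x\<bar> \<le> \<bar>d\<bar> + 1" by (simp add: abs_divide)
    then show ?thesis using False by (simp add: divide_le_eq)
  qed simp
  then show "\<exists>T B. open T \<and> x \<in> T \<and> (\<forall>y\<in>S \<inter> T. \<bar>g y - g x\<bar> \<le> B * \<bar>y - x\<bar>)"
    using T by blast
qed

lemma negligible_image_pointwise_lipschitz:
  assumes "pointwise_lipschitz_on k S" "negligible N"
  shows "negligible (k ` (N \<inter> S))"
proof (rule negligible_locally_Lipschitz_image)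
  show "negligible (N \<inter> S)" using assms(2) negligible_subset by blast
  fix x assume "x \<in> N \<inter> S"
  then obtain T B where "open T" "x \<in> T" "\<forall>y\<in>S \<inter> T. \<bar>k y - k x\<bar> \<le> B * \<bar>y - x\<bar>"
    using assms(1) unfolding pointwise_lipschitz_on_def by blast
  then show "\<exists>T B. open T \<and> x \<in> T \<and> (\<forall>y\<in>N \<inter> S \<inter> T. norm (k y - k x) \<le> B * norm (y - x))"
    by auto
qed simp

lemma last_crossing:
  fixes k :: "real \<Rightarrow> real"
  assumes cont: "continuous_on {a..b} k" and ab: "a \<le> b" and y: "k a \<le> y" "y < k b"
  obtains s where "a \<le> s" "s < b" "k s = y" "\<And>\<tau>. s < \<tau> \<Longrightarrow> \<tau> \<le> b \<Longrightarrow> y < k \<tau>"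
proof -
  define C where "C = {a..b} \<inter> k -` {..y}"
  have "closed C" unfolding C_def by (rule continuous_closed_preimage[OF cont]) auto
  moreover have "a \<in> C" using ab y by (simp add: C_def)
  moreover have bdd: "bdd_above C" by (auto simp: C_def bdd_above_def)
  ultimately have "Sup C \<in> C" using closed_contains_Sup by blast
  define s where "s = Sup C"
  have s: "a \<le> s" "s \<le> b" "k s \<le> y" using \<open>Sup C \<in> C\<close> by (auto simp: C_def s_def)
  have above: "y < k \<tau>" if "s < \<tau>" "\<tau> \<le> b" for \<tau>
  proof -
    have "\<tau> \<notin> C" using that cSup_upper[OF _ bdd, of \<tau>] by (auto simp: s_def)
    then show ?thesis using that s by (auto simp: C_def)
  qed
  have sb: "s < b" using s y(2) by (metis order_le_less not_le)
  have "(k \<longlongrightarrow> k s) (at s within {s..b})"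
    using continuous_on_subset[OF cont, of "{s..b}"] s sb by (auto simp: continuous_on_def)
  then have "(k \<longlongrightarrow> k s) (at_right s)" by (simp only: at_within_Icc_at_right[OF sb])
  moreover have "eventually (\<lambda>\<tau>. y \<le> k \<tau>) (at_right s)"
    unfolding eventually_at_right[OF sb] using above by (intro exI[of _ b]) (auto intro: sb less_imp_le)
  ultimately have "y \<le> k s" by (rule tendsto_lowerbound) simp
  then show ?thesis using that s sb above by simp
qed

text \<open>Some value strictly between \<open>k a\<close> and \<open>k b\<close> is attained only outside the negligible
  exceptional set; at the last time it is attained the right derivative is nonnegative.\<close>
lemma DERIV_neg_ae_imp_decreasing:
  fixes k :: "real \<Rightarrow> real"
  assumes ab: "a \<le> b" and pl: "pointwise_lipschitz_on k {a..b}" and N: "negligible N"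
    and der: "\<And>t. t \<in> {a..<b} - N \<Longrightarrow> \<exists>d. (k has_real_derivative d) (at t within {a..b}) \<and> d < 0"
  shows "k b \<le> k a"
proof (rule ccontr)
  assume "\<not> k b \<le> k a"
  then have lt: "k a < k b" by simp
  have "negligible (k ` (N \<inter> {a..b}))" using pl N by (rule negligible_image_pointwise_lipschitz)
  then have "\<not> {k a<..<k b} \<subseteq> k ` (N \<inter> {a..b})"
    using lt open_not_negligible[of "{k a<..<k b}"] negligible_subset by (auto simp: dense)
  then obtain y where "y \<in> {k a<..<k b}" "y \<notin> k ` (N \<inter> {a..b})" by blast
  then have y: "k a < y" "y < k b" "y \<notin> k ` (N \<inter> {a..b})" by auto
  obtain s where s: "a \<le> s" "s < b" "k s = y" and above: "\<And>\<tau>. s < \<tau> \<Longrightarrow> \<tau> \<le> b \<Longrightarrow> y < k \<tau>"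
    using last_crossing[OF pointwise_lipschitz_on_imp_continuous_on[OF pl] ab] y by (metis less_imp_le)
  then have "s \<notin> N" using y(3) by auto
  then obtain d where d: "(k has_real_derivative d) (at s within {a..b})" "d < 0"
    using der[of s] s by auto
  have "(k has_real_derivative d) (at s within {s..b})"
    using d(1) by (rule DERIV_subset) (use s in auto)
  then have "((\<lambda>\<tau>. (k \<tau> - k s) / (\<tau> - s)) \<longlongrightarrow> d) (at_right s)"
    using at_within_Icc_at_right[OF s(2)] by (simp add: has_field_derivative_iff)
  moreover have "eventually (\<lambda>\<tau>. 0 \<le> (k \<tau> - k s) / (\<tau> - s)) (at_right s)"
    unfolding eventually_at_right[OF s(2)] using above s(3)
    by (intro exI[of _ b]) (auto intro!: divide_nonneg_pos less_imp_le s(2))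
  ultimately have "0 \<le> d" by (rule tendsto_lowerbound) simp
  then show False using d(2) by simp
qed

lemma DERIV_nonpos_ae_imp_decreasing:
  fixes h :: "real \<Rightarrow> real"
  assumes ab: "a \<le> b" and pl: "pointwise_lipschitz_on h {a..b}" and N: "negligible N"
    and der: "\<And>t. t \<in> {a..<b} - N \<Longrightarrow> \<exists>d. (h has_real_derivative d) (at t within {a..b}) \<and> d \<le> 0"
  shows "h b \<le> h a"
proof (rule field_le_epsilon)
  fix e :: real assume e: "e > 0"
  define \<epsilon> where "\<epsilon> = e / (b - a + 1)"
  have \<epsilon>: "\<epsilon> > 0" "\<epsilon> * (b - a) \<le> e" using ab e by (simp_all add: \<epsilon>_def field_simps)
  have "pointwise_lipschitz_on (\<lambda>t. h t + - \<epsilon> * t) {a..b}"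
    by (intro pointwise_lipschitz_on_add pl pointwise_lipschitz_on_differentiable) simp
  then have "h b + - \<epsilon> * b \<le> h a + - \<epsilon> * a"
  proof (rule DERIV_neg_ae_imp_decreasing[OF ab _ N])
    fix t assume "t \<in> {a..<b} - N"
    then obtain d where d: "(h has_real_derivative d) (at t within {a..b})" "d \<le> 0"
      using der by blast
    have "((\<lambda>t. h t + - \<epsilon> * t) has_real_derivative d + - \<epsilon>) (at t within {a..b})"
      using d(1) by (auto intro!: derivative_eq_intros)
    then show "\<exists>d. ((\<lambda>t. h t + - \<epsilon> * t) has_real_derivative d) (at t within {a..b}) \<and> d < 0"
      using d(2) \<epsilon>(1) by (intro exI conjI) auto
  qed
  then show "h b \<le> h a + e" using \<epsilon>(2) by (simp add: algebra_simps)
qed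

lemma DERIV_le_linear_ae_imp_exp_bound:
  fixes w :: "real \<Rightarrow> real"
  assumes st: "s \<le> t" and \<delta>: "\<delta> > 0" and pl: "pointwise_lipschitz_on w {s..t}" and N: "negligible N"
    and der: "\<And>\<tau>. \<tau> \<in> {s..<t} - N \<Longrightarrow>
      \<exists>d. (w has_real_derivative d) (at \<tau> within {s..t}) \<and> d \<le> c - \<delta> * w \<tau>"
  shows "w t \<le> c / \<delta> + exp (- \<delta> * (t - s)) * (w s - c / \<delta>)"
proof -
  define h where "h \<tau> = exp (\<delta> * \<tau>) * (w \<tau> + - (c / \<delta>))" for \<tau>
  have "(\<lambda>\<tau>. exp (\<delta> * \<tau>)) differentiable at x" for x
    unfolding real_differentiable_def
    by (rule exI[of _ "exp (\<delta> * x) * \<delta>"]) (auto intro!: derivative_eq_intros)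
  then have "pointwise_lipschitz_on h {s..t}"
    unfolding h_def by (intro pointwise_lipschitz_on_mult pointwise_lipschitz_on_add pl
        pointwise_lipschitz_on_differentiable) simp_all
  then have "h t \<le> h s"
  proof (rule DERIV_nonpos_ae_imp_decreasing[OF st _ N])
    fix \<tau> assume "\<tau> \<in> {s..<t} - N"
    then obtain d where d: "(w has_real_derivative d) (at \<tau> within {s..t})" "d \<le> c - \<delta> * w \<tau>"
      using der by blast
    have "(h has_real_derivative exp (\<delta> * \<tau>) * (\<delta> * (w \<tau> - c / \<delta>) + d)) (at \<tau> within {s..t})"
      unfolding h_def using d(1) by (auto intro!: derivative_eq_intros simp: algebra_simps)
    moreover have "\<delta> * (w \<tau> - c / \<delta>) + d \<le> 0" using d(2) \<delta> by (simp add: algebra_simps)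
    ultimately show "\<exists>d. (h has_real_derivative d) (at \<tau> within {s..t}) \<and> d \<le> 0"
      by (blast intro: mult_nonneg_nonpos less_imp_le[OF exp_gt_zero])
  qed
  then have "w t - c / \<delta> \<le> exp (\<delta> * s) / exp (\<delta> * t) * (w s - c / \<delta>)"
    by (simp add: h_def pos_le_divide_eq mult.commute)
  also have "exp (\<delta> * s) / exp (\<delta> * t) = exp (- \<delta> * (t - s))"
    by (simp add: algebra_simps flip: exp_diff)
  finally show ?thesis by simp
qed

lemma DERIV_le_decaying_imp_tendsto_zero:
  fixes w g :: "real \<Rightarrow> real"
  assumes \<delta>: "\<delta> > 0" and g: "(g \<longlongrightarrow> 0) at_top"
    and pl: "pointwise_lipschitz_on w {0..}" and nonneg: "\<And>t. t \<ge> 0 \<Longrightarrow> w t \<ge> 0"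
    and N: "negligible N"
    and der: "\<And>\<tau>. \<tau> \<ge> 0 \<Longrightarrow> \<tau> \<notin> N \<Longrightarrow>
      \<exists>d. (w has_real_derivative d) (at \<tau> within {0..}) \<and> d \<le> g \<tau> - \<delta> * w \<tau>"
  shows "(w \<longlongrightarrow> 0) at_top"
  unfolding tendsto_iff
proof (intro allI impI)
  fix \<epsilon> :: real assume \<epsilon>: "\<epsilon> > 0"
  have "eventually (\<lambda>\<tau>. g \<tau> < \<delta> * \<epsilon> / 4) at_top"
    using \<delta> \<epsilon> by (intro order_tendstoD(2)[OF g]) simp
  then obtain T0 where "\<And>\<tau>. \<tau> \<ge> T0 \<Longrightarrow> g \<tau> < \<delta> * \<epsilon> / 4"
    unfolding eventually_at_top_linorder by blast
  then obtain T where T: "T \<ge> 0" "\<And>\<tau>. \<tau> \<ge> T \<Longrightarrow> g \<tau> < \<delta> * \<epsilon> / 4"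
    by (metis max.cobounded1 max.cobounded2 order_trans)
  have bound: "w t \<le> \<epsilon> / 4 + exp (- \<delta> * (t - T)) * w T" if t: "t \<ge> T" for t
  proof -
    have "w t \<le> (\<delta> * \<epsilon> / 4) / \<delta> + exp (- \<delta> * (t - T)) * (w T - (\<delta> * \<epsilon> / 4) / \<delta>)"
    proof (rule DERIV_le_linear_ae_imp_exp_bound[OF t \<delta> pointwise_lipschitz_on_subset[OF pl] N])
      fix \<tau> assume \<tau>: "\<tau> \<in> {T..<t} - N"
      then obtain d where d: "(w has_real_derivative d) (at \<tau> within {0..})" "d \<le> g \<tau> - \<delta> * w \<tau>"
        using der[of \<tau>] T(1) by auto
      have "(w has_real_derivative d) (at \<tau> within {T..t})"
        using d(1) by (rule DERIV_subset) (use T in auto)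
      moreover have "d \<le> \<delta> * \<epsilon> / 4 - \<delta> * w \<tau>" using d(2) T(2)[of \<tau>] \<tau> by auto
      ultimately show "\<exists>d. (w has_real_derivative d) (at \<tau> within {T..t}) \<and> d \<le> \<delta> * \<epsilon> / 4 - \<delta> * w \<tau>"
        by blast
    qed (use T in auto)
    also have "\<dots> \<le> \<epsilon> / 4 + exp (- \<delta> * (t - T)) * w T"
      using \<delta> \<epsilon> by (simp add: algebra_simps)
    finally show ?thesis .
  qed
  have "((\<lambda>t. exp (- \<delta> * (t - T)) * w T) \<longlongrightarrow> 0) at_top" using \<delta> by real_asymp
  then have "eventually (\<lambda>t. exp (- \<delta> * (t - T)) * w T < \<epsilon> / 2) at_top"
    by (rule order_tendstoD(2)) (use \<epsilon> in simp)
  then show "eventually (\<lambda>t. dist (w t) 0 < \<epsilon>) at_top"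
    using eventually_ge_at_top[of T]
  proof eventually_elim
    case (elim t)
    then show ?case using bound[of t] nonneg[of t] T(1) \<epsilon> by (simp add: dist_real_def)
  qed
qed

lemma DERIV_zero_if_dominated:
  assumes z: "(z has_vector_derivative 0) (at t within S)"
    and dom: "\<And>s. s \<in> S \<Longrightarrow> \<bar>f s - f t\<bar> \<le> C * norm (z s - z t)"
  shows "(f has_real_derivative 0) (at t within S)"
proof -
  have "((\<lambda>s. (1 / \<bar>s - t\<bar>) *\<^sub>R (z s - z t)) \<longlongrightarrow> 0) (at t within S)"
    using z by (simp add: has_vector_derivative_def has_derivative_within)
  then have "((\<lambda>s. C * norm ((1 / \<bar>s - t\<bar>) *\<^sub>R (z s - z t))) \<longlongrightarrow> 0) (at t within S)"
    by (intro tendsto_mult_right_zero tendsto_norm_zero)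
  then have "((\<lambda>s. (f s - f t) / (s - t)) \<longlongrightarrow> 0) (at t within S)"
  proof (rule Lim_null_comparison[rotated])
    show "eventually (\<lambda>s. norm ((f s - f t) / (s - t)) \<le> C * norm ((1 / \<bar>s - t\<bar>) *\<^sub>R (z s - z t)))
      (at t within S)"
      unfolding eventually_at_filter
    proof (intro always_eventually allI impI)
      fix s assume "s \<noteq> t" "s \<in> S"
      have "\<bar>f s - f t\<bar> / \<bar>s - t\<bar> \<le> C * norm (z s - z t) / \<bar>s - t\<bar>"
        using dom[OF \<open>s \<in> S\<close>] by (rule divide_right_mono) simp
      then show "norm ((f s - f t) / (s - t)) \<le> C * norm ((1 / \<bar>s - t\<bar>) *\<^sub>R (z s - z t))"
        by (simp add: abs_divide)
    qed
  qed
  then show ?thesis by (simp add: has_field_derivative_iff)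
qed

lemma has_vector_derivative_nth:
  fixes z :: "real \<Rightarrow> real ^ 'n"
  assumes "(z has_vector_derivative v) F"
  shows "((\<lambda>t. z t $ i) has_real_derivative v $ i) F"
  using bounded_linear.has_vector_derivative[OF bounded_linear_vec_nth assms]
  by (simp add: has_real_derivative_iff_has_vector_derivative)

lemma DERIV_zero_at_zero_of_nonneg:
  fixes f :: "real \<Rightarrow> real"
  assumes "(f has_real_derivative d) (at t within {0..})" "t > 0"
    and "\<And>s. s \<ge> 0 \<Longrightarrow> f s \<ge> 0" "f t = 0"
  shows "d = 0"
proof -
  have "(f has_real_derivative d) (at t within {0<..})"
    using assms(1) by (rule DERIV_subset) auto
  then have "(f has_real_derivative d) (at t)" using assms(2) by (subst (asm) at_within_open) auto
  then show ?thesis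
  proof (rule DERIV_local_min[of f d t t])
    show "\<forall>y. \<bar>t - y\<bar> < t \<longrightarrow> f t \<le> f y"
    proof (intro allI impI)
      fix y assume "\<bar>t - y\<bar> < t"
      then have "y \<ge> 0" by linarith
      then show "f t \<le> f y" using assms(3,4) by simp
    qed
  qed (use assms(2) in simp)
qed

section \<open>The function \<open>phi a b = (a - b)\<^sup>2 / (a + b)\<close>\<close>

text \<open>Note \<open>phi 0 0 = 0\<close> (division by zero), the continuous extension to the closed quadrant.\<close>
definition phi :: "real \<Rightarrow> real \<Rightarrow> real" where
  "phi a b = (a - b)\<^sup>2 / (a + b)"

definition phi_deriv :: "real \<Rightarrow> real \<Rightarrow> real \<Rightarrow> real \<Rightarrow> real" where
  "phi_deriv a b da db = (a - b) * ((a + 3 * b) * da - (3 * a + b) * db) / (a + b)\<^sup>2"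

lemma phi_nonneg: "0 \<le> a \<Longrightarrow> 0 \<le> b \<Longrightarrow> 0 \<le> phi a b"
  by (simp add: phi_def)

lemma phi_le_sum:
  assumes "0 \<le> a" "0 \<le> b"
  shows "phi a b \<le> a + b"
proof (cases "a + b = 0")
  case False
  then have "a + b > 0" using assms by simp
  moreover have "(a - b)\<^sup>2 \<le> (a + b) * (a + b)" using assms by (simp add: power2_eq_square algebra_simps)
  ultimately show ?thesis by (simp add: phi_def divide_le_eq)
qed (simp add: phi_def)

lemma phi_eq_sum_minus:
  assumes "a + b > 0"
  shows "phi a b = (a + b) - 4 * (a * (b / (a + b)))"
  using assms by (simp add: phi_def field_simps power2_eq_square)

text \<open>By \<open>phi_eq_sum_minus\<close>, this reduces to a Lipschitz bound for
  \<open>a \<cdot> b / (a + b)\<close>, in which the fraction \<open>b / (a + b)\<close> lies in \<open>[0, 1]\<close>.\<close>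
lemma phi_lipschitz:
  assumes "0 \<le> a" "0 \<le> b" "0 \<le> a'" "0 \<le> b'"
  shows "\<bar>phi a b - phi a' b'\<bar> \<le> 9 * (\<bar>a - a'\<bar> + \<bar>b - b'\<bar>)"
proof (cases "a + b = 0 \<or> a' + b' = 0")
  case True
  then show ?thesis
    using assms phi_le_sum[of a b] phi_le_sum[of a' b'] phi_nonneg[of a b] phi_nonneg[of a' b']
    by (auto simp: phi_def)
next
  case False
  define s s' where "s = a + b" and "s' = a' + b'"
  have sp: "s > 0" "s' > 0" using False assms by (auto simp: s_def s'_def)
  have q: "\<bar>b / s - b' / s'\<bar> \<le> (\<bar>a - a'\<bar> + \<bar>b - b'\<bar>) / s'"
  proof -
    define X where "X = b * (a' - a) + a * (b - b')"
    have "\<bar>X\<bar> \<le> b * \<bar>a - a'\<bar> + a * \<bar>b - b'\<bar>"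
      using assms by (simp add: X_def abs_mult abs_minus_commute abs_triangle_ineq[THEN order_trans])
    also have "\<dots> \<le> s * \<bar>a - a'\<bar> + s * \<bar>b - b'\<bar>"
      using assms by (intro add_mono mult_right_mono) (auto simp: s_def)
    finally have "\<bar>X\<bar> / (s * s') \<le> s * (\<bar>a - a'\<bar> + \<bar>b - b'\<bar>) / (s * s')"
      using sp by (intro divide_right_mono) (auto simp: algebra_simps)
    moreover have "b / s - b' / s' = X / (s * s')"
      using sp by (simp add: X_def field_simps s_def s'_def)
    ultimately show ?thesis using sp by (simp add: abs_divide abs_mult)
  qed
  have bs: "0 \<le> b / s" "b / s \<le> 1" using assms sp by (auto simp: s_def)
  have "\<bar>a * (b / s) - a' * (b' / s')\<bar> = \<bar>(a - a') * (b / s) + a' * (b / s - b' / s')\<bar>"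
    using sp by (simp add: field_simps)
  also have "\<dots> \<le> \<bar>a - a'\<bar> * (b / s) + a' * \<bar>b / s - b' / s'\<bar>"
    using assms bs by (metis abs_mult abs_of_nonneg abs_triangle_ineq)
  also have "\<dots> \<le> \<bar>a - a'\<bar> * 1 + s' * ((\<bar>a - a'\<bar> + \<bar>b - b'\<bar>) / s')"
    using bs q assms by (intro add_mono mult_left_mono mult_mono) (auto simp: s'_def)
  also have "\<dots> = 2 * \<bar>a - a'\<bar> + \<bar>b - b'\<bar>" using sp by simp
  finally have m: "\<bar>a * (b / s) - a' * (b' / s')\<bar> \<le> 2 * \<bar>a - a'\<bar> + \<bar>b - b'\<bar>" .
  define m where "m = a * (b / s) - a' * (b' / s')"
  have "phi a b - phi a' b' = (s - s') - 4 * m"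
    using phi_eq_sum_minus[of a b] phi_eq_sum_minus[of a' b'] sp by (simp add: s_def s'_def m_def)
  then have "\<bar>phi a b - phi a' b'\<bar> \<le> \<bar>s - s'\<bar> + 4 * \<bar>m\<bar>"
    using abs_triangle_ineq4[of "s - s'" "4 * m"] by simp
  moreover have "\<bar>s - s'\<bar> \<le> \<bar>a - a'\<bar> + \<bar>b - b'\<bar>" by (simp add: s_def s'_def)
  ultimately show ?thesis using m abs_ge_zero[of "b - b'"] unfolding m_def[symmetric] by (smt (verit))
qed

lemma DERIV_phi:
  assumes "(f has_real_derivative df) (at t within S)" "(g has_real_derivative dg) (at t within S)"
    and "f t + g t \<noteq> 0"
  shows "((\<lambda>s. phi (f s) (g s)) has_real_derivative phi_deriv (f t) (g t) df dg) (at t within S)"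
  unfolding phi_def
  using assms by (auto intro!: derivative_eq_intros simp: phi_deriv_def field_simps power2_eq_square)

section \<open>Filippov velocities\<close>

lemma filippov_set_nth_eq:
  assumes v: "v \<in> filippov_set D X x"
    and near: "\<And>\<eta>. \<eta> > 0 \<Longrightarrow> \<exists>e>0. \<forall>y\<in>ball x e \<inter> D. \<bar>X y $ i - c\<bar> \<le> \<eta>"
  shows "v $ i = c"
proof -
  have "\<bar>v $ i - c\<bar> \<le> 0 + \<eta>" if \<eta>: "\<eta> > 0" for \<eta>
  proof -
    obtain e where e: "e > 0" "\<forall>y\<in>ball x e \<inter> D. \<bar>X y $ i - c\<bar> \<le> \<eta>" using near[OF \<eta>] by blast
    define H where "H = (\<lambda>w. w $ i) -` {c - \<eta>..c + \<eta>}"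
    have "convex H" unfolding H_def
      by (rule convex_linear_vimage) (auto intro: bounded_linear.linear)
    moreover have "closed H" unfolding H_def
      by (intro closed_vimage) (auto intro: continuous_intros)
    moreover have "X ` ((ball x e \<inter> D) - {}) \<subseteq> H" using e(2) by (force simp: H_def abs_le_iff)
    ultimately have "closure (convex hull (X ` ((ball x e \<inter> D) - {}))) \<subseteq> H"
      by (simp add: closure_minimal hull_minimal)
    moreover have "v \<in> closure (convex hull (X ` ((ball x e \<inter> D) - {})))"
      using v e(1) unfolding filippov_set_def by blast
    ultimately show ?thesis by (auto simp: H_def abs_le_iff)
  qed
  then show ?thesis using field_le_epsilon[of "\<bar>v $ i - c\<bar>" 0] by simp
qed

lemma filippov_set_nth_eq_isCont:
  assumes "v \<in> filippov_set D X x" "isCont (\<lambda>y. X y $ i) x"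
  shows "v $ i = X x $ i"
proof (rule filippov_set_nth_eq[OF assms(1)])
  fix \<eta> :: real assume "\<eta> > 0"
  then obtain e where "e > 0" "\<forall>y. dist y x < e \<longrightarrow> dist (X y $ i) (X x $ i) < \<eta>"
    using assms(2) unfolding continuous_at_eps_delta by blast
  then show "\<exists>e>0. \<forall>y\<in>ball x e \<inter> D. \<bar>X y $ i - X x $ i\<bar> \<le> \<eta>"
    by (intro exI[of _ e]) (auto simp: dist_real_def dist_commute less_imp_le)
qed

section \<open>The closed-loop vector field\<close>

lemma Dprime_nonneg: "y \<in> Dprime \<Longrightarrow> 0 \<le> y $ i"
  by (simp add: Dprime_def)

lemma Dprime_M_Ms_eq_0_iff: "y \<in> Dprime \<Longrightarrow> y $ 2 + y $ 4 = 0 \<longleftrightarrow> y $ 2 = 0 \<and> y $ 4 = 0"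
  using Dprime_nonneg[of y 2] Dprime_nonneg[of y 4] by auto

locale sterile_insect_control =
  fixes \<beta>E \<nu>E \<delta>E \<delta>M \<delta>F \<delta>s K \<nu> \<gamma>s \<theta> \<alpha> \<beta>s :: real
  assumes \<beta>E_pos: "\<beta>E > 0" and \<nu>E_pos: "\<nu>E > 0" and \<delta>E_pos: "\<delta>E > 0" and \<delta>M_pos: "\<delta>M > 0"
    and \<delta>F_pos: "\<delta>F > 0" and \<delta>s_pos: "\<delta>s > 0" and K_pos: "K > 0"
    and \<nu>_pos: "0 < \<nu>" and \<nu>_less_1: "\<nu> < 1" and \<gamma>s_pos: "0 < \<gamma>s"
    and \<theta>_pos: "\<theta> > 0" and \<alpha>_pos: "\<alpha> > 0" and \<beta>s_pos: "\<beta>s > 0"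
    and \<delta>M_le_\<delta>s: "\<delta>M \<le> \<delta>s" and R_less_1: "Rtheta \<beta>E \<nu> \<nu>E \<delta>E \<delta>F \<gamma>s \<theta> < 1"
begin

lemmas params_pos = \<beta>E_pos \<nu>E_pos \<delta>E_pos \<delta>M_pos \<delta>F_pos \<delta>s_pos K_pos \<nu>_pos \<nu>_less_1 \<gamma>s_pos
  \<theta>_pos \<alpha>_pos \<beta>s_pos

abbreviation "X \<equiv> Xcl \<beta>E \<nu>E \<delta>E \<delta>M \<delta>F \<delta>s K \<nu> \<gamma>s \<theta> \<alpha> \<beta>s"
abbreviation "\<psi> \<equiv> psi \<beta>E \<nu> \<nu>E \<delta>E \<delta>F \<gamma>s \<theta>"
abbreviation "R \<equiv> Rtheta \<beta>E \<nu> \<nu>E \<delta>E \<delta>F \<gamma>s \<theta>"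
abbreviation "G \<equiv> Gfb \<beta>E \<nu>E \<delta>E \<delta>M \<delta>F \<delta>s \<nu> \<gamma>s \<theta> \<alpha> \<beta>s"

definition G_expr :: "real ^ 4 \<Rightarrow> real" where
  "G_expr y = \<gamma>s * \<psi> * y$1 * (\<theta> * y$2 + y$4)\<^sup>2 / (\<alpha> * (y$2 + \<gamma>s * y$4) * (3 * \<theta> * y$2 + y$4))
     + ((1 - \<nu>) * \<nu>E * \<theta> * y$1 - \<theta> * \<delta>M * y$2) * (\<theta> * y$2 + 3 * y$4) / (3 * \<theta> * y$2 + y$4)
     + \<delta>s * y$4 + (\<beta>s / \<alpha>) * (\<theta> * y$2 - y$4)"

lemma G_eq_G_expr: "y$2 + y$4 \<noteq> 0 \<Longrightarrow> G y = G_expr y"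
  unfolding Gfb_def G_expr_def Let_def by simp

lemma G_zero: "y$2 + y$4 = 0 \<Longrightarrow> G y = 0"
  unfolding Gfb_def Let_def by simp

lemma X_nth_1: "X y $ 1 = \<beta>E * y$3 * (1 - y$1 / K) - (\<nu>E + \<delta>E) * y$1"
  by (simp add: Xcl_def Let_def vec4_def)

lemma X_nth_2: "X y $ 2 = (1 - \<nu>) * \<nu>E * y$1 - \<delta>M * y$2"
  by (simp add: Xcl_def Let_def vec4_def)

lemma X_nth_3: "X y $ 3 = \<nu> * \<nu>E * y$1 * (y$2 / (y$2 + \<gamma>s * y$4)) - \<delta>F * y$3"
  by (simp add: Xcl_def Let_def vec4_def)

lemma X_nth_4: "X y $ 4 = max 0 (G y) - \<delta>s * y$4"
  by (simp add: Xcl_def Let_def vec4_def ufb_def)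

lemma X_zero: "X 0 = 0"
  by (simp add: vec_eq_iff forall_4 X_nth_1 X_nth_2 X_nth_3 X_nth_4 G_zero)

lemma one_plus_\<gamma>s\<theta>_pos: "0 < 1 + \<gamma>s * \<theta>"
  using \<gamma>s_pos \<theta>_pos by (simp add: add_pos_pos)

lemma psi_nonneg: "\<psi> \<ge> 0"
  using R_less_1 params_pos one_plus_\<gamma>s\<theta>_pos unfolding psi_def
  by (intro divide_nonneg_pos mult_pos_pos) auto

lemma male_fraction_bounds:
  assumes "y \<in> Dprime"
  shows "0 \<le> y$2 / (y$2 + \<gamma>s * y$4)" "y$2 / (y$2 + \<gamma>s * y$4) \<le> 1"
proof -
  have "0 \<le> y$2" "0 \<le> \<gamma>s * y$4" using assms \<gamma>s_pos by (simp_all add: Dprime_nonneg)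
  then show "0 \<le> y$2 / (y$2 + \<gamma>s * y$4)" "y$2 / (y$2 + \<gamma>s * y$4) \<le> 1"
    by (simp, cases "y$2 + \<gamma>s * y$4 = 0") (simp_all add: divide_le_eq_1)
qed

lemma male_sums_pos:
  assumes "x \<in> Dprime" "x$2 + x$4 > 0"
  shows "0 < x$2 + \<gamma>s * x$4" "0 < \<theta> * x$2 + x$4" "0 < 3 * \<theta> * x$2 + x$4"
proof -
  have "0 < c * x$2 + d * x$4" if "0 < c" "0 < d" for c d
  proof (cases "0 < x$2")
    case True
    then show ?thesis using that assms(1) by (simp add: add_pos_nonneg Dprime_nonneg)
  next
    case False
    then have "0 < x$4" using assms Dprime_nonneg[of x 2] by linarith
    then show ?thesis using that assms(1) by (simp add: add_nonneg_pos Dprime_nonneg)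
  qed
  from this[of 1 \<gamma>s] this[of \<theta> 1] this[of "3 * \<theta>" 1]
  show "0 < x$2 + \<gamma>s * x$4" "0 < \<theta> * x$2 + x$4" "0 < 3 * \<theta> * x$2 + x$4"
    using \<gamma>s_pos \<theta>_pos by simp_all
qed

lemma X_nth_3_le: "y \<in> Dprime \<Longrightarrow> X y $ 3 \<le> \<nu> * \<nu>E * y$1 - \<delta>F * y$3"
  using mult_left_le[OF male_fraction_bounds(2), of y "\<nu> * \<nu>E * y$1"] params_pos
  by (simp add: X_nth_3 Dprime_nonneg)

lemma G_split:
  assumes "x$2 + x$4 \<noteq> 0"
  shows "G x = \<gamma>s * \<psi> * x$1 * (\<theta> * x$2 + x$4)\<^sup>2 / (\<alpha> * (x$2 + \<gamma>s * x$4) * (3 * \<theta> * x$2 + x$4))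
    + (\<theta> * x$2 + 3 * x$4) * (\<theta> * X x$2) / (3 * \<theta> * x$2 + x$4)
    + \<delta>s * x$4 + \<beta>s / \<alpha> * (\<theta> * x$2 - x$4)"
  using assms by (simp add: G_eq_G_expr G_expr_def X_nth_2 algebra_simps)

lemma G_mult:
  assumes x: "x \<in> Dprime" "x$2 + x$4 > 0"
  shows "G x * (3 * \<theta> * x$2 + x$4)
    = \<gamma>s * \<psi> * x$1 * (\<theta> * x$2 + x$4)\<^sup>2 / (\<alpha> * (x$2 + \<gamma>s * x$4))
      + (\<theta> * x$2 + 3 * x$4) * (\<theta> * X x$2) + \<delta>s * x$4 * (3 * \<theta> * x$2 + x$4)
      + \<beta>s / \<alpha> * (\<theta> * x$2 - x$4) * (3 * \<theta> * x$2 + x$4)"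
proof -
  define P S T1 T2 where "P = x$2 + \<gamma>s * x$4" and "S = 3 * \<theta> * x$2 + x$4"
    and "T1 = \<gamma>s * \<psi> * x$1 * (\<theta> * x$2 + x$4)\<^sup>2" and "T2 = (\<theta> * x$2 + 3 * x$4) * (\<theta> * X x$2)"
  have "P \<noteq> 0" "S \<noteq> 0" "\<alpha> \<noteq> 0" using male_sums_pos[OF x] \<alpha>_pos by (simp_all add: P_def S_def)
  moreover have "G x = T1 / (\<alpha> * P * S) + T2 / S + \<delta>s * x$4 + \<beta>s / \<alpha> * (\<theta> * x$2 - x$4)"
    using G_split x(2) by (simp add: P_def S_def T1_def T2_def)
  ultimately have "G x * S = T1 / (\<alpha> * P) + T2 + \<delta>s * x$4 * S + \<beta>s / \<alpha> * (\<theta> * x$2 - x$4) * S"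
    by (simp add: field_simps)
  then show ?thesis by (simp add: P_def S_def T1_def T2_def)
qed

lemma X_nth_1_ge:
  assumes "y \<in> Dprime" "y$1 \<le> Eb" "y$3 \<le> Fb"
  shows "- (\<beta>E * Fb * Eb / K + (\<nu>E + \<delta>E) * Eb) \<le> X y $ 1"
proof -
  have nn: "0 \<le> y$1" "0 \<le> y$3" using assms(1) by (simp_all add: Dprime_nonneg)
  then have "\<beta>E * y$3 * y$1 / K \<le> \<beta>E * Fb * Eb / K"
    using assms params_pos by (intro divide_right_mono mult_mono) auto
  moreover have "(\<nu>E + \<delta>E) * y$1 \<le> (\<nu>E + \<delta>E) * Eb"
    using assms params_pos by (intro mult_left_mono) auto
  moreover have "0 \<le> \<beta>E * y$3" using \<beta>E_pos nn by simp
  ultimately show ?thesis by (simp add: X_nth_1 algebra_simps)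
qed

definition "Cms = \<gamma>s * \<psi> * (\<theta> + 1 / \<gamma>s) / \<alpha> + 3 * \<theta> * (1 - \<nu>) * \<nu>E + \<beta>s * \<theta> / \<alpha>"

definition "dms = min \<delta>s (\<beta>s / \<alpha>)"

lemma Cms_nonneg: "0 \<le> Cms"
  using psi_nonneg params_pos unfolding Cms_def by (intro add_nonneg_nonneg) auto

lemma dms_pos: "0 < dms"
  using params_pos by (simp add: dms_def)

lemma G_first_term_le:
  assumes y: "y \<in> Dprime" "y$2 + y$4 > 0"
  shows "\<gamma>s * \<psi> * y$1 * (\<theta> * y$2 + y$4)\<^sup>2 / (\<alpha> * (y$2 + \<gamma>s * y$4) * (3 * \<theta> * y$2 + y$4))
    \<le> \<gamma>s * \<psi> * (\<theta> + 1 / \<gamma>s) / \<alpha> * y$1"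
proof -
  define M Ms A where "M = y$2" and "Ms = y$4" and "A = \<gamma>s * \<psi> * y$1 / \<alpha>"
  have nn: "0 \<le> M" "0 \<le> Ms" "0 \<le> y$1" using y by (simp_all add: M_def Ms_def Dprime_nonneg)
  have pos: "0 < M + \<gamma>s * Ms" "0 < \<theta> * M + Ms" "0 < 3 * \<theta> * M + Ms"
    using male_sums_pos[OF y] by (simp_all add: M_def Ms_def)
  have "(\<theta> * M + Ms)\<^sup>2 / ((M + \<gamma>s * Ms) * (3 * \<theta> * M + Ms))
      = (\<theta> * M + Ms) / (M + \<gamma>s * Ms) * ((\<theta> * M + Ms) / (3 * \<theta> * M + Ms))"
    by (simp add: power2_eq_square)
  also have "\<dots> \<le> (\<theta> * M + Ms) / (M + \<gamma>s * Ms) * 1"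
    using pos nn \<theta>_pos by (intro mult_left_mono) auto
  also have "\<dots> \<le> \<theta> + 1 / \<gamma>s"
    using pos nn \<gamma>s_pos \<theta>_pos by (simp add: divide_le_eq algebra_simps)
  finally have "A * ((\<theta> * M + Ms)\<^sup>2 / ((M + \<gamma>s * Ms) * (3 * \<theta> * M + Ms))) \<le> A * (\<theta> + 1 / \<gamma>s)"
    using psi_nonneg params_pos nn by (intro mult_left_mono) (auto simp: A_def)
  then show ?thesis by (simp add: A_def M_def Ms_def ac_simps)
qed

lemma G_second_term_le:
  assumes y: "y \<in> Dprime" "y$2 + y$4 > 0"
  shows "(\<theta> * y$2 + 3 * y$4) * (\<theta> * X y$2) / (3 * \<theta> * y$2 + y$4) \<le> 3 * \<theta> * (1 - \<nu>) * \<nu>E * y$1"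
proof -
  define q where "q = (\<theta> * y$2 + 3 * y$4) / (3 * \<theta> * y$2 + y$4)"
  have "0 < 3 * \<theta> * y$2 + y$4" using male_sums_pos[OF y] by simp
  then have q: "0 \<le> q" "q \<le> 3" using y \<theta>_pos by (auto simp: q_def divide_le_eq Dprime_nonneg)
  have "\<theta> * X y$2 \<le> \<theta> * (1 - \<nu>) * \<nu>E * y$1"
    using params_pos y by (simp add: X_nth_2 algebra_simps Dprime_nonneg)
  then have "\<theta> * X y$2 * q \<le> \<theta> * (1 - \<nu>) * \<nu>E * y$1 * q" using q by (intro mult_right_mono) auto
  also have "\<dots> \<le> \<theta> * (1 - \<nu>) * \<nu>E * y$1 * 3"
    using q params_pos y by (intro mult_left_mono) (auto simp: Dprime_nonneg)
  finally show ?thesis by (simp add: q_def ac_simps)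
qed

lemma X_nth_4_le:
  assumes y: "y \<in> Dprime"
  shows "X y $ 4 \<le> Cms * (y$1 + y$2) - dms * y$4"
proof -
  define E M Ms where "E = y$1" and "M = y$2" and "Ms = y$4"
  have nn: "0 \<le> E" "0 \<le> M" "0 \<le> Ms" using y by (simp_all add: E_def M_def Ms_def Dprime_nonneg)
  define k1 k2 k3 where "k1 = \<gamma>s * \<psi> * (\<theta> + 1 / \<gamma>s) / \<alpha>" and "k2 = 3 * \<theta> * (1 - \<nu>) * \<nu>E"
    and "k3 = \<beta>s * \<theta> / \<alpha>"
  have k: "0 \<le> k1" "0 \<le> k2" "0 \<le> k3" using psi_nonneg params_pos by (simp_all add: k1_def k2_def k3_def)
  have Cms: "Cms * (E + M) = k1 * E + k2 * E + k3 * M + (k3 * E + (k1 + k2) * M)"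
    unfolding Cms_def k1_def[symmetric] k2_def[symmetric] k3_def[symmetric] by (simp add: algebra_simps)
  have dms: "dms * Ms \<le> \<delta>s * Ms" "dms * Ms \<le> \<beta>s / \<alpha> * Ms"
    using nn by (intro mult_right_mono; simp add: dms_def)+
  have extra: "0 \<le> k3 * E" "0 \<le> (k1 + k2) * M" "0 \<le> Cms * (E + M)"
    using k nn Cms_nonneg by simp_all
  show ?thesis
  proof (cases "G y \<le> 0")
    case True
    then have "X y $ 4 = - \<delta>s * Ms" by (simp add: X_nth_4 Ms_def)
    then show ?thesis using dms Cms extra unfolding E_def[symmetric] M_def[symmetric] Ms_def[symmetric]
      by linarith
  next
    case False
    then have "y$2 + y$4 \<noteq> 0" by (auto simp: G_zero)
    then have "y$2 + y$4 > 0" using nn by (simp add: M_def Ms_def)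
    then have "X y $ 4 \<le> k1 * E + k2 * E + \<beta>s / \<alpha> * (\<theta> * M - Ms)"
      using False G_split[OF \<open>y$2 + y$4 \<noteq> 0\<close>] G_first_term_le[OF y] G_second_term_le[OF y]
      by (simp add: X_nth_4 k1_def k2_def E_def M_def Ms_def)
    also have "\<beta>s / \<alpha> * (\<theta> * M - Ms) = k3 * M - \<beta>s / \<alpha> * Ms" by (simp add: k3_def algebra_simps)
    finally show ?thesis using Cms dms extra unfolding E_def[symmetric] M_def[symmetric] Ms_def[symmetric]
      by linarith
  qed
qed

section \<open>Filippov solutions are classical almost everywhere\<close>

lemma isCont_X_nth_1: "isCont (\<lambda>y. X y $ 1) x"
  unfolding X_nth_1 using K_pos by (intro continuous_intros) auto

lemma isCont_X_nth_2: "isCont (\<lambda>y. X y $ 2) x"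
  unfolding X_nth_2 by (intro continuous_intros)

lemma isCont_X_nth_3_4:
  assumes x: "x \<in> Dprime" "x$2 + x$4 > 0"
  shows "isCont (\<lambda>y. X y $ 3) x" "isCont (\<lambda>y. X y $ 4) x"
proof -
  have d: "x$2 + \<gamma>s * x$4 \<noteq> 0" "3 * \<theta> * x$2 + x$4 \<noteq> 0"
    using male_sums_pos[OF x] by simp_all
  show "isCont (\<lambda>y. X y $ 3) x" unfolding X_nth_3
    using d by (intro continuous_intros) auto
  have "isCont (\<lambda>y. y$2 + y$4) x" by (intro continuous_intros)
  then have "eventually (\<lambda>y. y$2 + y$4 > 0) (nhds x)"
    using x(2) by (simp add: isCont_def eventually_nhds_conv_at order_tendstoD(1))
  then have "eventually (\<lambda>y. X y $ 4 = max 0 (G_expr y) - \<delta>s * y$4) (nhds x)"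
    by eventually_elim (simp add: X_nth_4 G_eq_G_expr)
  moreover have "isCont (\<lambda>y. max 0 (G_expr y) - \<delta>s * y$4) x"
    unfolding G_expr_def using \<alpha>_pos d by (intro continuous_intros) auto
  ultimately show "isCont (\<lambda>y. X y $ 4) x" by (subst isCont_cong) auto
qed

text \<open>At a point with no eggs the male fraction in \<open>X y $ 3\<close> may jump, but it is multiplied by
  the number of eggs, so \<open>X y $ 3\<close> is still continuous there relative to \<open>Dprime\<close>.\<close>
lemma X_nth_3_near_no_eggs:
  assumes x: "x \<in> Dprime" "x$1 = 0" and \<eta>: "\<eta> > 0"
  shows "\<exists>e>0. \<forall>y\<in>ball x e \<inter> Dprime. \<bar>X y $ 3 - X x $ 3\<bar> \<le> \<eta>"
proof -
  define L where "L = \<nu> * \<nu>E + \<delta>F"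
  have L: "L > 0" using params_pos by (simp add: L_def add_pos_pos)
  have "\<bar>X y $ 3 - X x $ 3\<bar> \<le> \<eta>" if y: "y \<in> ball x (\<eta> / L) \<inter> Dprime" for y
  proof -
    have y1: "0 \<le> y$1" "y$1 \<le> norm (y - x)"
      using y x component_le_norm_cart[of "y - x" 1] by (auto simp: Dprime_nonneg)
    have y3: "\<bar>y$3 - x$3\<bar> \<le> norm (y - x)" using component_le_norm_cart[of "y - x" 3] by simp
    have f: "0 \<le> y$2 / (y$2 + \<gamma>s * y$4)" "y$2 / (y$2 + \<gamma>s * y$4) \<le> 1"
      using male_fraction_bounds y by auto
    have "\<nu> * \<nu>E * y$1 * (y$2 / (y$2 + \<gamma>s * y$4)) \<le> \<nu> * \<nu>E * y$1"
      by (rule mult_left_le[OF f(2)]) (use y1 params_pos in simp)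
    moreover have "0 \<le> \<nu> * \<nu>E * y$1 * (y$2 / (y$2 + \<gamma>s * y$4))"
      using f(1) y1 params_pos by (intro mult_nonneg_nonneg) auto
    ultimately have "\<bar>\<nu> * \<nu>E * y$1 * (y$2 / (y$2 + \<gamma>s * y$4))\<bar> \<le> \<nu> * \<nu>E * y$1"
      by (simp only: abs_of_nonneg)
    moreover have "X y $ 3 - X x $ 3 = \<nu> * \<nu>E * y$1 * (y$2 / (y$2 + \<gamma>s * y$4)) - \<delta>F * (y$3 - x$3)"
      using x(2) by (simp add: X_nth_3 algebra_simps)
    ultimately have "\<bar>X y $ 3 - X x $ 3\<bar> \<le> \<nu> * \<nu>E * y$1 + \<delta>F * \<bar>y$3 - x$3\<bar>"
      using \<delta>F_pos by (simp add: abs_mult abs_triangle_ineq4[THEN order_trans])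
    also have "\<dots> \<le> L * norm (y - x)"
      using y1 y3 params_pos by (simp add: L_def distrib_right add_mono)
    also have "\<dots> \<le> \<eta>" using y L by (simp add: dist_norm norm_minus_commute field_simps)
    finally show ?thesis .
  qed
  then show ?thesis using \<eta> L by (intro exI[of _ "\<eta> / L"]) auto
qed

text \<open>The field is discontinuous on the face \<open>M = M\<^sub>s = 0\<close>. But at a positive time on that face
  \<open>M\<close> and \<open>M\<^sub>s\<close> are minimal, so their derivatives vanish; for \<open>M\<close> this forces \<open>E = 0\<close>, and
  near \<open>E = 0\<close> the third component is continuous after all.\<close>
lemma filippov_velocity_eq:
  assumes t: "t > 0" and zD: "\<And>s. s \<ge> 0 \<Longrightarrow> z s \<in> Dprime"
    and d: "(z has_vector_derivative v) (at t within {0..})"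
    and f: "v \<in> filippov_set Dprime X (z t)"
  shows "v = X (z t)"
proof -
  define x where "x = z t"
  have xD: "x \<in> Dprime" using zD t by (simp add: x_def)
  have fx: "v \<in> filippov_set Dprime X x" using f by (simp add: x_def)
  have dc: "((\<lambda>s. z s $ i) has_real_derivative v $ i) (at t within {0..})" for i
    using d by (rule has_vector_derivative_nth)
  have znn: "s \<ge> 0 \<Longrightarrow> z s $ i \<ge> 0" for i s using zD by (simp add: Dprime_nonneg)
  have v1: "v $ 1 = X x $ 1" and v2: "v $ 2 = X x $ 2"
    using filippov_set_nth_eq_isCont[OF fx] isCont_X_nth_1 isCont_X_nth_2 by blast+
  have "v $ 3 = X x $ 3 \<and> v $ 4 = X x $ 4"
  proof (cases "x$2 + x$4 > 0")
    case True
    then show ?thesis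
      using filippov_set_nth_eq_isCont[OF fx] isCont_X_nth_3_4[OF xD] by blast
  next
    case False
    then have "x$2 + x$4 = 0" using Dprime_nonneg[OF xD, of 2] Dprime_nonneg[OF xD, of 4] by linarith
    then have x24: "x$2 = 0" "x$4 = 0" using Dprime_M_Ms_eq_0_iff[OF xD] by simp_all
    have "v $ 2 = 0" by (rule DERIV_zero_at_zero_of_nonneg[OF dc t]) (use znn x24 x_def in auto)
    then have "x$1 = 0" using v2 x24 params_pos by (simp add: X_nth_2)
    then have "v $ 3 = X x $ 3"
      using filippov_set_nth_eq[OF fx X_nth_3_near_no_eggs[OF xD]] by blast
    moreover have "v $ 4 = 0" by (rule DERIV_zero_at_zero_of_nonneg[OF dc t]) (use znn x24 x_def in auto)
    ultimately show ?thesis using x24 by (simp add: X_nth_4 G_zero)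
  qed
  then show ?thesis using v1 v2 by (simp add: vec_eq_iff forall_4 x_def)
qed

section \<open>The Lyapunov function\<close>

definition "cE = 2 / (1 - R)"

definition "cF = cE * \<beta>E / \<delta>F"

definition V :: "real ^ 4 \<Rightarrow> real" where
  "V y = cE * y$1 + cF * y$3 + \<alpha> * phi (\<theta> * y$2) (y$4)"

lemma cE_pos: "cE > 0" and cF_pos: "cF > 0"
  using R_less_1 params_pos by (simp_all add: cE_def cF_def)

text \<open>The weights \<open>cE\<close> and \<open>cF\<close> are chosen so that the linear part of the derivative of \<open>V\<close>
  is \<open>-2 (\<nu>E + \<delta>E) E\<close> up to a term that the feedback compensates.\<close>
lemma cE_eq: "cE * (\<nu>E + \<delta>E) = 2 * (\<nu>E + \<delta>E) + \<psi>"
  and cF_eq: "cF * \<nu> * \<nu>E = \<psi> * (1 + \<gamma>s * \<theta>)"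
proof -
  define r w g where "r = R" and "w = 1 - R" and "g = 1 + \<gamma>s * \<theta>"
  have nz: "w \<noteq> 0" "g \<noteq> 0" "\<delta>F \<noteq> 0" "\<nu>E + \<delta>E \<noteq> 0"
    using R_less_1 params_pos one_plus_\<gamma>s\<theta>_pos by (auto simp: w_def g_def)
  have \<psi>_eq: "\<psi> = 2 * (\<beta>E * \<nu> * \<nu>E) / (\<delta>F * w * g)"
    by (simp add: psi_def w_def g_def mult.assoc)
  have "r = \<beta>E * \<nu> * \<nu>E / (\<delta>F * (\<nu>E + \<delta>E) * g)"
    by (simp add: r_def g_def Rtheta_def R0_def)
  then have num: "\<beta>E * \<nu> * \<nu>E = r * (\<delta>F * (\<nu>E + \<delta>E) * g)" using nz by simp
  have r_eq: "r = 1 - w" by (simp add: w_def r_def)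
  show "cE * (\<nu>E + \<delta>E) = 2 * (\<nu>E + \<delta>E) + \<psi>"
    unfolding cE_def w_def[symmetric] \<psi>_eq num r_eq using nz by (simp add: field_simps)
  show "cF * \<nu> * \<nu>E = \<psi> * (1 + \<gamma>s * \<theta>)"
    unfolding cF_def cE_def w_def[symmetric] g_def[symmetric] \<psi>_eq using nz by (simp add: field_simps)
qed

lemma V_nonneg: "y \<in> Dprime \<Longrightarrow> 0 \<le> V y"
  and cE_le_V: "y \<in> Dprime \<Longrightarrow> cE * y$1 \<le> V y"
  and cF_le_V: "y \<in> Dprime \<Longrightarrow> cF * y$3 \<le> V y"
  using phi_nonneg[of "\<theta> * y$2" "y$4"] cE_pos cF_pos params_pos
  by (simp_all add: V_def Dprime_nonneg)

definition "LV = cE + cF + 9 * \<alpha> * (\<theta> + 1)"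

lemma V_lipschitz:
  assumes "y \<in> Dprime" "y' \<in> Dprime"
  shows "\<bar>V y - V y'\<bar> \<le> LV * norm (y - y')"
proof -
  define n where "n = norm (y - y')"
  have d: "\<bar>y$i - y'$i\<bar> \<le> n" for i
    using component_le_norm_cart[of "y - y'" i] by (simp add: n_def)
  have "\<bar>phi (\<theta> * y$2) (y$4) - phi (\<theta> * y'$2) (y'$4)\<bar> \<le> 9 * (\<theta> * \<bar>y$2 - y'$2\<bar> + \<bar>y$4 - y'$4\<bar>)"
    using phi_lipschitz[of "\<theta> * y$2" "y$4" "\<theta> * y'$2" "y'$4"] assms \<theta>_pos
    by (simp add: Dprime_nonneg abs_mult flip: right_diff_distrib)
  also have "\<dots> \<le> 9 * (\<theta> * n + n)" using d \<theta>_pos by (intro mult_left_mono add_mono) auto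
  finally have "\<alpha> * \<bar>phi (\<theta> * y$2) (y$4) - phi (\<theta> * y'$2) (y'$4)\<bar> \<le> \<alpha> * (9 * (\<theta> * n + n))"
    using \<alpha>_pos by simp
  moreover have "cE * \<bar>y$1 - y'$1\<bar> \<le> cE * n" "cF * \<bar>y$3 - y'$3\<bar> \<le> cF * n"
    using d cE_pos cF_pos by (simp_all add: mult_left_mono)
  moreover have "\<bar>V y - V y'\<bar> \<le> cE * \<bar>y$1 - y'$1\<bar> + cF * \<bar>y$3 - y'$3\<bar>
      + \<alpha> * \<bar>phi (\<theta> * y$2) (y$4) - phi (\<theta> * y'$2) (y'$4)\<bar>"
  proof -
    define A B C where "A = cE * (y$1 - y'$1)" and "B = cF * (y$3 - y'$3)"
      and "C = \<alpha> * (phi (\<theta> * y$2) (y$4) - phi (\<theta> * y'$2) (y'$4))"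
    have "V y - V y' = A + B + C" by (simp add: V_def A_def B_def C_def algebra_simps)
    then have "\<bar>V y - V y'\<bar> \<le> \<bar>A\<bar> + \<bar>B\<bar> + \<bar>C\<bar>"
      using abs_triangle_ineq[of "A + B" C] abs_triangle_ineq[of A B] by linarith
    then show ?thesis using cE_pos cF_pos \<alpha>_pos by (simp add: A_def B_def C_def abs_mult)
  qed
  ultimately show ?thesis by (simp add: LV_def n_def algebra_simps)
qed

lemma V_zero: "V 0 = 0"
  by (simp add: V_def phi_def)

lemma V_le: "y \<in> Dprime \<Longrightarrow> V y \<le> LV * norm y"
  using V_lipschitz[of y 0] V_zero by (simp add: Dprime_def)

lemma EF_part_bound:
  assumes x: "x \<in> Dprime" "x$2 + x$4 > 0"
  shows "cE * X x$1 + cF * X x$3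
    \<le> - 2 * (\<nu>E + \<delta>E) * x$1 + \<psi> * \<gamma>s * (\<theta> * x$2 - x$4) * x$1 / (x$2 + \<gamma>s * x$4)"
proof -
  define E M F Ms where "E = x$1" and "M = x$2" and "F = x$3" and "Ms = x$4"
  have nn: "0 \<le> E" "0 \<le> F" using x by (simp_all add: E_def F_def Dprime_nonneg)
  have P: "M + \<gamma>s * Ms \<noteq> 0" using male_sums_pos[OF x] by (simp add: M_def Ms_def)
  have "cE * X x$1 + cF * X x$3
      = - (cE * \<beta>E * F * E / K) - cE * (\<nu>E + \<delta>E) * E + cF * \<nu> * \<nu>E * E * (M / (M + \<gamma>s * Ms))"
    using params_pos by (simp add: X_nth_1 X_nth_3 cF_def E_def M_def F_def Ms_def field_simps)
  also have "cF * \<nu> * \<nu>E * E * (M / (M + \<gamma>s * Ms))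
      = \<psi> * E + \<psi> * \<gamma>s * (\<theta> * M - Ms) * E / (M + \<gamma>s * Ms)"
    unfolding cF_eq using P by (simp add: field_simps)
  also have "cE * (\<nu>E + \<delta>E) * E = 2 * (\<nu>E + \<delta>E) * E + \<psi> * E"
    using cE_eq by (simp add: algebra_simps)
  finally have "cE * X x$1 + cF * X x$3 = - (cE * \<beta>E * F * E / K) - 2 * (\<nu>E + \<delta>E) * E
      + \<psi> * \<gamma>s * (\<theta> * M - Ms) * E / (M + \<gamma>s * Ms)"
    by simp
  moreover have "0 \<le> cE * \<beta>E * F * E / K" using cE_pos params_pos nn by simp
  ultimately show ?thesis unfolding E_def M_def Ms_def by linarith
qed

lemma phi_part_eq:
  assumes x: "x \<in> Dprime" "x$2 + x$4 > 0"
  defines "a \<equiv> \<theta> * x$2" and "b \<equiv> x$4" and "S \<equiv> 3 * \<theta> * x$2 + x$4" and "u \<equiv> max 0 (G x)"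
  shows "\<alpha> * phi_deriv a b (\<theta> * X x$2) (X x$4)
    = \<alpha> * (a - b) * S * (G x - u) / (a + b)\<^sup>2 - \<psi> * \<gamma>s * (a - b) * x$1 / (x$2 + \<gamma>s * x$4)
      - \<beta>s * (a - b)\<^sup>2 * S / (a + b)\<^sup>2"
proof -
  define P T where "P = x$2 + \<gamma>s * x$4" and "T = \<gamma>s * \<psi> * x$1 * (a + b)\<^sup>2 / (\<alpha> * P)"
  have "G x * S = T + (a + 3 * b) * (\<theta> * X x$2) + \<delta>s * b * S + \<beta>s / \<alpha> * (a - b) * S"
    using G_mult[OF x] by (simp add: a_def b_def P_def S_def T_def algebra_simps)
  then have Q: "(a + 3 * b) * (\<theta> * X x$2) - S * X x$4 = S * (G x - u) - T - \<beta>s / \<alpha> * (a - b) * S"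
    by (simp add: X_nth_4 u_def b_def algebra_simps)
  define D where "D = (a + b)\<^sup>2"
  have "D \<noteq> 0" "P \<noteq> 0" "\<alpha> \<noteq> 0"
    using male_sums_pos[OF x] \<alpha>_pos by (simp_all add: D_def a_def b_def P_def)
  moreover have S: "3 * a + b = S" by (simp add: a_def b_def S_def)
  ultimately show ?thesis
    unfolding phi_deriv_def S Q T_def D_def[symmetric] P_def[symmetric]
    by (simp add: field_simps power2_eq_square)
qed

lemma phi_part_bound:
  assumes x: "x \<in> Dprime" "x$2 + x$4 > 0"
  shows "\<alpha> * phi_deriv (\<theta> * x$2) (x$4) (\<theta> * X x$2) (X x$4)
    \<le> - \<psi> * \<gamma>s * (\<theta> * x$2 - x$4) * x$1 / (x$2 + \<gamma>s * x$4)"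
proof -
  define a b E P S where "a = \<theta> * x$2" and "b = x$4" and "E = x$1"
    and "P = x$2 + \<gamma>s * x$4" and "S = 3 * \<theta> * x$2 + x$4"
  define u where "u = max 0 (G x)"
  have nn: "0 \<le> a" "0 \<le> b" "0 \<le> E"
    using x \<theta>_pos by (simp_all add: a_def b_def E_def Dprime_nonneg)
  have pos: "0 < P" "0 < a + b" "0 < S"
    using male_sums_pos[OF x] by (simp_all add: a_def b_def P_def S_def)
  have split: "\<alpha> * phi_deriv a b (\<theta> * X x$2) (X x$4)
      = \<alpha> * (a - b) * S * (G x - u) / (a + b)\<^sup>2 - \<psi> * \<gamma>s * (a - b) * E / P
        - \<beta>s * (a - b)\<^sup>2 * S / (a + b)\<^sup>2"
    using phi_part_eq[OF x] by (simp add: a_def b_def E_def P_def S_def u_def)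
  have "\<alpha> * phi_deriv a b (\<theta> * X x$2) (X x$4) \<le> - \<psi> * \<gamma>s * (a - b) * E / P"
  proof (cases "b \<le> a \<or> u = G x")
    case True
    then have "(a - b) * (G x - u) \<le> 0" by (auto simp: u_def mult_nonneg_nonpos)
    then have "\<alpha> * S * ((a - b) * (G x - u)) / (a + b)\<^sup>2 \<le> 0"
      using \<alpha>_pos pos by (simp add: divide_nonpos_nonneg mult_nonneg_nonpos)
    moreover have "\<alpha> * S * ((a - b) * (G x - u)) = \<alpha> * (a - b) * S * (G x - u)"
      by (simp add: algebra_simps)
    moreover have "0 \<le> \<beta>s * (a - b)\<^sup>2 * S / (a + b)\<^sup>2" using \<beta>s_pos pos by simp
    ultimately show ?thesis using split by simp
  next
    case False
    then have ab: "a < b" and u0: "u = 0" by (auto simp: u_def)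
    have "0 \<le> \<theta> * ((1 - \<nu>) * \<nu>E * x$1)" using params_pos x by (simp add: Dprime_nonneg)
    then have "- \<delta>M * a \<le> \<theta> * X x$2" by (simp add: X_nth_2 a_def algebra_simps)
    then have "(a + 3 * b) * (- \<delta>M * a) + S * (\<delta>M * b) \<le> (a + 3 * b) * (\<theta> * X x$2) + S * (\<delta>s * b)"
      using nn pos \<delta>M_le_\<delta>s by (intro add_mono mult_left_mono mult_right_mono) auto
    moreover have "(a + 3 * b) * (- \<delta>M * a) + S * (\<delta>M * b) = \<delta>M * (b - a) * (b + a)"
      by (simp add: S_def a_def b_def algebra_simps)
    moreover have "0 \<le> \<delta>M * (b - a) * (b + a)" using ab nn \<delta>M_pos by simp
    ultimately have "0 \<le> (a + 3 * b) * (\<theta> * X x$2) - (3 * a + b) * X x$4"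
      using u0 by (simp add: X_nth_4 u_def b_def S_def a_def algebra_simps)
    then have "\<alpha> * phi_deriv a b (\<theta> * X x$2) (X x$4) \<le> 0"
      unfolding phi_deriv_def using ab \<alpha>_pos
      by (simp add: mult_nonpos_nonneg divide_nonpos_nonneg mult_nonneg_nonpos)
    moreover have "\<psi> * \<gamma>s * (a - b) * E / P \<le> 0"
      using ab nn pos psi_nonneg \<gamma>s_pos
      by (simp add: mult_nonneg_nonpos mult_nonpos_nonneg divide_nonpos_pos)
    ultimately show ?thesis by linarith
  qed
  then show ?thesis by (simp add: a_def b_def E_def P_def)
qed

lemma V_derivative_bound:
  assumes "x \<in> Dprime" "x$2 + x$4 > 0"
  shows "cE * X x$1 + cF * X x$3 + \<alpha> * phi_deriv (\<theta> * x$2) (x$4) (\<theta> * X x$2) (X x$4)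
    \<le> - 2 * (\<nu>E + \<delta>E) * x$1"
  using EF_part_bound[OF assms] phi_part_bound[OF assms] by simp

end

section \<open>Stability\<close>

lemma norm_le_sum_Dprime:
  assumes "y \<in> Dprime"
  shows "norm y \<le> y$1 + y$2 + y$3 + y$4"
proof -
  have "norm y \<le> (\<Sum>i\<in>UNIV. \<bar>y $ i\<bar>)" by (rule norm_le_l1_cart)
  also have "\<dots> = y$1 + y$2 + y$3 + y$4"
    using assms by (simp add: sum_4 Dprime_nonneg)
  finally show ?thesis .
qed

context sterile_insect_control
begin

text \<open>Constants of the linear bound on solutions: \<open>E\<close> and \<open>F\<close> are controlled by \<open>V\<close>, then
  \<open>M\<close> and \<open>M\<^sub>s\<close> by their linear differential inequalities.\<close>
definition "kE = LV / cE"

definition "kF = LV / cF"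

definition "kM = (1 - \<nu>) * \<nu>E * kE / \<delta>M + 1"

definition "kMs = Cms * (kE + kM) / dms + 1"

definition "kstab = kE + kF + kM + kMs"

lemma kE_nonneg: "0 \<le> kE" and kM_nonneg: "0 \<le> kM" and kstab_pos: "0 < kstab"
proof -
  have "0 \<le> LV" using cE_pos cF_pos params_pos by (simp add: LV_def)
  then have kE: "0 \<le> kE" and kF: "0 \<le> kF" using cE_pos cF_pos by (simp_all add: kE_def kF_def)
  then have kM: "0 \<le> kM" using params_pos by (simp add: kM_def)
  have "0 < kMs" using kE kM Cms_nonneg dms_pos by (simp add: kMs_def add_nonneg_pos)
  then show "0 \<le> kE" "0 \<le> kM" "0 < kstab" using kE kF kM by (simp_all add: kstab_def)
qed

end

locale sterile_insect_solution = sterile_insect_control +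
  fixes z :: "real \<Rightarrow> real ^ 4"
  assumes solution: "filippov_solution Dprime X z"

begin

lemma z_in_Dprime: "t \<ge> 0 \<Longrightarrow> z t \<in> Dprime"
  using solution by (simp add: filippov_solution_def)

lemma z_nonneg: "t \<ge> 0 \<Longrightarrow> 0 \<le> z t $ i"
  using z_in_Dprime by (simp add: Dprime_nonneg)

lemma pointwise_lipschitz_on_comp:
  assumes f: "\<And>y y'. y \<in> Dprime \<Longrightarrow> y' \<in> Dprime \<Longrightarrow> \<bar>f y - f y'\<bar> \<le> C * norm (y - y')"
  shows "pointwise_lipschitz_on (\<lambda>t. f (z t)) {0..}"
  unfolding pointwise_lipschitz_on_def
proof
  fix t :: real assume t: "t \<in> {0..}"
  then obtain e L where e: "e > 0" and L: "L-lipschitz_on ({0..} \<inter> cball t e) z"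
    using solution unfolding filippov_solution_def by auto
  have "\<bar>f (z s) - f (z t)\<bar> \<le> \<bar>C\<bar> * L * \<bar>s - t\<bar>" if s: "s \<in> {0..} \<inter> ball t e" for s
  proof -
    have "norm (z s - z t) \<le> L * \<bar>s - t\<bar>"
      using lipschitz_onD[OF L, of s t] s t e by (auto simp: dist_norm)
    then have "C * norm (z s - z t) \<le> \<bar>C\<bar> * (L * \<bar>s - t\<bar>)"
      by (meson abs_ge_self abs_ge_zero mult_mono norm_ge_zero order_trans)
    then show ?thesis using f[OF z_in_Dprime z_in_Dprime, of s t] s t by (simp add: mult.assoc)
  qed
  then show "\<exists>T B. open T \<and> t \<in> T \<and> (\<forall>s\<in>{0..} \<inter> T. \<bar>f (z s) - f (z t)\<bar> \<le> B * \<bar>s - t\<bar>)"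
    using e by (intro exI[of _ "ball t e"] exI[of _ "\<bar>C\<bar> * L"]) auto
qed

lemma pointwise_lipschitz_on_nth: "pointwise_lipschitz_on (\<lambda>t. z t $ i) {0..}"
  using pointwise_lipschitz_on_comp[of "\<lambda>y. y $ i" 1] component_le_norm_cart[of "_ - _" i] by simp

lemma pointwise_lipschitz_on_V: "pointwise_lipschitz_on (\<lambda>t. V (z t)) {0..}"
  by (rule pointwise_lipschitz_on_comp[OF V_lipschitz])

lemma classical_ae:
  obtains N where "negligible N"
    and "\<And>t. t \<ge> 0 \<Longrightarrow> t \<notin> N \<Longrightarrow> (z has_vector_derivative X (z t)) (at t within {0..})"
proof -
  have "AE t in lborel. 0 \<le> t \<longrightarrow>
      (\<exists>v. (z has_vector_derivative v) (at t within {0..}) \<and> v \<in> filippov_set Dprime X (z t))"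
    using solution by (simp add: filippov_solution_def)
  then obtain N0 where N0: "N0 \<in> null_sets lborel"
    and P: "\<And>t. t \<in> space lborel - N0 \<Longrightarrow> 0 \<le> t \<longrightarrow>
      (\<exists>v. (z has_vector_derivative v) (at t within {0..}) \<and> v \<in> filippov_set Dprime X (z t))"
    by (rule AE_E3) blast
  have "negligible N0" using null_sets_completionI[OF N0] by (simp add: negligible_iff_null_sets)
  then have "negligible (insert 0 N0)" by simp
  moreover have "(z has_vector_derivative X (z t)) (at t within {0..})"
    if t: "t \<ge> 0" "t \<notin> insert 0 N0" for t
  proof -
    obtain v where v: "(z has_vector_derivative v) (at t within {0..})" "v \<in> filippov_set Dprime X (z t)"
      using P[of t] t by auto
    have "v = X (z t)" using filippov_velocity_eq[OF _ z_in_Dprime v] t by auto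
    then show ?thesis using v by simp
  qed
  ultimately show ?thesis using that by blast
qed

lemma zero_if_no_males:
  assumes t: "t > 0" and dz: "(z has_vector_derivative X (z t)) (at t within {0..})"
    and M: "z t $ 2 = 0" "z t $ 4 = 0"
  shows "z t = 0"
proof -
  have dc: "((\<lambda>s. z s $ i) has_real_derivative X (z t) $ i) (at t within {0..})" for i
    using dz by (rule has_vector_derivative_nth)
  have "X (z t) $ 2 = 0" by (rule DERIV_zero_at_zero_of_nonneg[OF dc t z_nonneg M(1)])
  then have E: "z t $ 1 = 0" using M params_pos by (simp add: X_nth_2)
  have "X (z t) $ 1 = 0" by (rule DERIV_zero_at_zero_of_nonneg[OF dc t z_nonneg E])
  then have "z t $ 3 = 0" using E params_pos by (simp add: X_nth_1)
  then show ?thesis using E M by (simp add: vec_eq_iff forall_4)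
qed

lemma DERIV_V:
  assumes t: "t > 0" and dz: "(z has_vector_derivative X (z t)) (at t within {0..})"
  shows "\<exists>d. ((\<lambda>s. V (z s)) has_real_derivative d) (at t within {0..}) \<and> d \<le> - 2 * (\<nu>E + \<delta>E) * z t $ 1"
proof (cases "z t $ 2 + z t $ 4 > 0")
  case True
  define x where "x = z t"
  have dc: "((\<lambda>s. z s $ i) has_real_derivative X x $ i) (at t within {0..})" for i
    using has_vector_derivative_nth[OF dz] by (simp add: x_def)
  have x: "x \<in> Dprime" "x$2 + x$4 > 0" using z_in_Dprime t True by (simp_all add: x_def)
  have "0 < \<theta> * x$2 + x$4" using male_sums_pos[OF x] by simp
  then have "((\<lambda>s. V (z s)) has_real_derivative
      cE * X x$1 + cF * X x$3 + \<alpha> * phi_deriv (\<theta> * x$2) (x$4) (\<theta> * X x$2) (X x$4)) (at t within {0..})"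
    unfolding V_def x_def
    by (intro DERIV_add DERIV_cmult DERIV_phi[unfolded x_def] dc[unfolded x_def] derivative_intros) auto
  moreover have "cE * X x$1 + cF * X x$3 + \<alpha> * phi_deriv (\<theta> * x$2) (x$4) (\<theta> * X x$2) (X x$4)
      \<le> - 2 * (\<nu>E + \<delta>E) * x$1"
    using V_derivative_bound[OF x] .
  ultimately show ?thesis by (auto simp: x_def)
next
  case False
  then have "z t $ 2 + z t $ 4 = 0" using z_nonneg[of t 2] z_nonneg[of t 4] t by linarith
  then have "z t $ 2 = 0" "z t $ 4 = 0" using Dprime_M_Ms_eq_0_iff[OF z_in_Dprime] t by simp_all
  then have z0: "z t = 0" using zero_if_no_males[OF t dz] by simp
  have "((\<lambda>s. V (z s)) has_real_derivative 0) (at t within {0..})"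
  proof (rule DERIV_zero_if_dominated)
    show "(z has_vector_derivative 0) (at t within {0..})" using dz z0 X_zero by simp
    show "\<bar>V (z s) - V (z t)\<bar> \<le> LV * norm (z s - z t)" if "s \<in> {0..}" for s
      using V_lipschitz z_in_Dprime that t by simp
  qed
  then show ?thesis using z0 by auto
qed

lemma V_decrease:
  assumes ab: "0 \<le> a" "a \<le> b" and m: "\<And>\<tau>. \<tau> \<in> {a..b} \<Longrightarrow> m \<le> z \<tau> $ 1"
  shows "V (z b) + 2 * (\<nu>E + \<delta>E) * m * (b - a) \<le> V (z a)"
proof -
  define \<kappa> where "\<kappa> = 2 * (\<nu>E + \<delta>E)"
  have \<kappa>: "\<kappa> > 0" using params_pos by (simp add: \<kappa>_def)
  obtain N where N: "negligible N"
    and dz: "\<And>t. t \<ge> 0 \<Longrightarrow> t \<notin> N \<Longrightarrow> (z has_vector_derivative X (z t)) (at t within {0..})"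
    using classical_ae by metis
  have "pointwise_lipschitz_on (\<lambda>\<tau>. V (z \<tau>) + \<kappa> * m * \<tau>) {a..b}"
    using ab by (intro pointwise_lipschitz_on_add pointwise_lipschitz_on_differentiable
        pointwise_lipschitz_on_subset[OF pointwise_lipschitz_on_V]) auto
  then have "V (z b) + \<kappa> * m * b \<le> V (z a) + \<kappa> * m * a"
  proof (rule DERIV_nonpos_ae_imp_decreasing[OF ab(2) _ negligible_insert[THEN iffD2, OF N, of 0]])
    fix \<tau> assume \<tau>: "\<tau> \<in> {a..<b} - insert 0 N"
    then have "\<tau> > 0" using ab by auto
    then obtain d where d: "((\<lambda>s. V (z s)) has_real_derivative d) (at \<tau> within {0..})"
      "d \<le> - \<kappa> * z \<tau> $ 1"
      using DERIV_V dz \<tau> unfolding \<kappa>_def by fastforce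
    have "((\<lambda>s. V (z s)) has_real_derivative d) (at \<tau> within {a..b})"
      using d(1) by (rule DERIV_subset) (use ab in auto)
    then have "((\<lambda>\<tau>. V (z \<tau>) + \<kappa> * m * \<tau>) has_real_derivative d + \<kappa> * m) (at \<tau> within {a..b})"
      by (auto intro!: derivative_eq_intros)
    moreover have "\<kappa> * m \<le> \<kappa> * z \<tau> $ 1" using m[of \<tau>] \<tau> \<kappa> by (intro mult_left_mono) auto
    ultimately show "\<exists>d. ((\<lambda>\<tau>. V (z \<tau>) + \<kappa> * m * \<tau>) has_real_derivative d) (at \<tau> within {a..b}) \<and> d \<le> 0"
      using d(2) by (intro exI conjI) auto
  qed
  then show ?thesis by (simp add: \<kappa>_def algebra_simps)
qed

lemma V_antimono: "0 \<le> a \<Longrightarrow> a \<le> b \<Longrightarrow> V (z b) \<le> V (z a)"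
  using V_decrease[of a b 0] z_nonneg by auto

lemma E_le: "t \<ge> 0 \<Longrightarrow> z t $ 1 \<le> V (z 0) / cE"
  using cE_le_V[OF z_in_Dprime, of t] V_antimono[of 0 t] cE_pos by (simp add: field_simps)

lemma F_le: "t \<ge> 0 \<Longrightarrow> z t $ 3 \<le> V (z 0) / cF"
  using cF_le_V[OF z_in_Dprime, of t] V_antimono[of 0 t] cF_pos by (simp add: field_simps)

lemma component_le:
  assumes st: "0 \<le> s" "s \<le> t" and \<delta>: "\<delta> > 0" and c: "0 \<le> c"
    and X: "\<And>\<tau>. \<tau> \<in> {s..t} \<Longrightarrow> X (z \<tau>) $ i \<le> c - \<delta> * z \<tau> $ i"
  shows "z t $ i \<le> c / \<delta> + z s $ i"
proof -
  obtain N where N: "negligible N"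
    and dz: "\<And>t. t \<ge> 0 \<Longrightarrow> t \<notin> N \<Longrightarrow> (z has_vector_derivative X (z t)) (at t within {0..})"
    using classical_ae by metis
  have "z t $ i \<le> c / \<delta> + exp (- \<delta> * (t - s)) * (z s $ i - c / \<delta>)"
  proof (rule DERIV_le_linear_ae_imp_exp_bound[OF st(2) \<delta>
        pointwise_lipschitz_on_subset[OF pointwise_lipschitz_on_nth] N])
    fix \<tau> assume \<tau>: "\<tau> \<in> {s..<t} - N"
    then have "((\<lambda>s. z s $ i) has_real_derivative X (z \<tau>) $ i) (at \<tau> within {0..})"
      using st by (intro has_vector_derivative_nth dz) auto
    then have "((\<lambda>s. z s $ i) has_real_derivative X (z \<tau>) $ i) (at \<tau> within {s..t})"
      by (rule DERIV_subset) (use st in auto)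
    then show "\<exists>d. ((\<lambda>s. z s $ i) has_real_derivative d) (at \<tau> within {s..t}) \<and> d \<le> c - \<delta> * z \<tau> $ i"
      using X[of \<tau>] \<tau> by auto
  qed (use st in auto)
  also have "\<dots> \<le> c / \<delta> + exp (- \<delta> * (t - s)) * z s $ i"
    using \<delta> c by (simp add: algebra_simps)
  also have "\<dots> \<le> c / \<delta> + z s $ i"
    using st \<delta> z_nonneg[of s i] by (simp add: mult_left_le_one_le)
  finally show ?thesis .
qed

lemma component_tendsto_zero:
  assumes \<delta>: "\<delta> > 0" and g: "(g \<longlongrightarrow> 0) at_top"
    and X: "\<And>\<tau>. \<tau> \<ge> 0 \<Longrightarrow> X (z \<tau>) $ i \<le> g \<tau> - \<delta> * z \<tau> $ i"
  shows "((\<lambda>t. z t $ i) \<longlongrightarrow> 0) at_top"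
proof -
  obtain N where N: "negligible N"
    and dz: "\<And>t. t \<ge> 0 \<Longrightarrow> t \<notin> N \<Longrightarrow> (z has_vector_derivative X (z t)) (at t within {0..})"
    using classical_ae by metis
  show ?thesis
  proof (rule DERIV_le_decaying_imp_tendsto_zero[OF \<delta> g pointwise_lipschitz_on_nth z_nonneg N])
    fix \<tau> :: real assume "\<tau> \<ge> 0" "\<tau> \<notin> N"
    then show "\<exists>d. ((\<lambda>t. z t $ i) has_real_derivative d) (at \<tau> within {0..}) \<and> d \<le> g \<tau> - \<delta> * z \<tau> $ i"
      using X[of \<tau>] by (intro exI[of _ "X (z \<tau>) $ i"] conjI has_vector_derivative_nth dz)
  qed
qed

lemma norm_le_kstab:
  assumes t: "t \<ge> 0"
  shows "norm (z t) \<le> kstab * norm (z 0)"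
proof -
  define n0 where "n0 = norm (z 0)"
  have n0: "0 \<le> n0" and comp0: "z 0 $ i \<le> n0" for i
    using component_le_norm_cart[of "z 0" i] by (auto simp: n0_def)
  have "V (z 0) \<le> LV * n0" using V_le[OF z_in_Dprime] by (simp add: n0_def)
  then have E: "z \<tau> $ 1 \<le> kE * n0" and F: "z \<tau> $ 3 \<le> kF * n0" if "\<tau> \<ge> 0" for \<tau>
    using E_le[OF that] F_le[OF that] cE_pos cF_pos
    by (auto simp: kE_def kF_def field_simps intro: order_trans)
  have M: "z \<tau> $ 2 \<le> kM * n0" if \<tau>: "\<tau> \<ge> 0" for \<tau>
  proof -
    have "z \<tau> $ 2 \<le> (1 - \<nu>) * \<nu>E * (kE * n0) / \<delta>M + z 0 $ 2"
    proof (rule component_le[OF order_refl \<tau> \<delta>M_pos])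
      show "0 \<le> (1 - \<nu>) * \<nu>E * (kE * n0)" using params_pos kE_nonneg n0 by simp
      fix s assume "s \<in> {0..\<tau>}"
      then have "(1 - \<nu>) * \<nu>E * z s $ 1 \<le> (1 - \<nu>) * \<nu>E * (kE * n0)"
        using E[of s] params_pos by (intro mult_left_mono) auto
      then show "X (z s) $ 2 \<le> (1 - \<nu>) * \<nu>E * (kE * n0) - \<delta>M * z s $ 2" by (simp add: X_nth_2)
    qed
    also have "\<dots> \<le> kM * n0" using comp0[of 2] params_pos by (simp add: kM_def field_simps)
    finally show ?thesis .
  qed
  have Ms: "z t $ 4 \<le> kMs * n0"
  proof -
    have "z t $ 4 \<le> Cms * (kE * n0 + kM * n0) / dms + z 0 $ 4"
    proof (rule component_le[OF order_refl t dms_pos])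
      show "0 \<le> Cms * (kE * n0 + kM * n0)" using Cms_nonneg kE_nonneg kM_nonneg n0 by simp
      fix s assume "s \<in> {0..t}"
      then have "Cms * (z s $ 1 + z s $ 2) \<le> Cms * (kE * n0 + kM * n0)"
        using E[of s] M[of s] Cms_nonneg by (intro mult_left_mono add_mono) auto
      then show "X (z s) $ 4 \<le> Cms * (kE * n0 + kM * n0) - dms * z s $ 4"
        using X_nth_4_le[OF z_in_Dprime, of s] \<open>s \<in> {0..t}\<close> by simp
    qed
    also have "\<dots> \<le> kMs * n0" using comp0[of 4] dms_pos by (simp add: kMs_def field_simps)
    finally show ?thesis .
  qed
  have "norm (z t) \<le> z t $ 1 + z t $ 2 + z t $ 3 + z t $ 4" by (rule norm_le_sum_Dprime[OF z_in_Dprime[OF t]])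
  also have "\<dots> \<le> kstab * n0" using E[OF t] M[OF t] F[OF t] Ms by (simp add: kstab_def algebra_simps)
  finally show ?thesis by (simp add: n0_def)
qed

section \<open>Attractivity\<close>

definition "E_drop_rate = \<beta>E * (V (z 0) / cF) * (V (z 0) / cE) / K + (\<nu>E + \<delta>E) * (V (z 0) / cE)"

lemma E_drop_rate_nonneg: "0 \<le> E_drop_rate"
  using V_nonneg[OF z_in_Dprime, of 0] cE_pos cF_pos params_pos by (simp add: E_drop_rate_def)

lemma E_drop:
  assumes "0 \<le> t" "t \<le> \<tau>"
  shows "z t $ 1 - E_drop_rate * (\<tau> - t) \<le> z \<tau> $ 1"
proof -
  obtain N where N: "negligible N"
    and dz: "\<And>t. t \<ge> 0 \<Longrightarrow> t \<notin> N \<Longrightarrow> (z has_vector_derivative X (z t)) (at t within {0..})"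
    using classical_ae by metis
  have "pointwise_lipschitz_on (\<lambda>s. - z s $ 1 + - E_drop_rate * s) {t..\<tau>}"
    using assms by (intro pointwise_lipschitz_on_add pointwise_lipschitz_on_uminus
        pointwise_lipschitz_on_differentiable pointwise_lipschitz_on_subset[OF pointwise_lipschitz_on_nth]) auto
  then have "- z \<tau> $ 1 + - E_drop_rate * \<tau> \<le> - z t $ 1 + - E_drop_rate * t"
  proof (rule DERIV_nonpos_ae_imp_decreasing[OF assms(2) _ N])
    fix s assume s: "s \<in> {t..<\<tau>} - N"
    then have "((\<lambda>s. z s $ 1) has_real_derivative X (z s) $ 1) (at s within {0..})"
      using assms by (intro has_vector_derivative_nth dz) auto
    then have "((\<lambda>s. z s $ 1) has_real_derivative X (z s) $ 1) (at s within {t..\<tau>})"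
      by (rule DERIV_subset) (use assms in auto)
    then have "((\<lambda>s. - z s $ 1 + - E_drop_rate * s) has_real_derivative - X (z s) $ 1 + - E_drop_rate)
        (at s within {t..\<tau>})"
      by (auto intro!: derivative_eq_intros)
    moreover have "- E_drop_rate \<le> X (z s) $ 1"
      unfolding E_drop_rate_def using s assms
      by (intro X_nth_1_ge z_in_Dprime E_le F_le) auto
    ultimately show "\<exists>d. ((\<lambda>s. - z s $ 1 + - E_drop_rate * s) has_real_derivative d) (at s within {t..\<tau>}) \<and> d \<le> 0"
      by (intro exI conjI) auto
  qed
  then show ?thesis by (simp add: algebra_simps)
qed

lemma V_drop_if_E_large:
  assumes t: "0 \<le> t" and \<epsilon>: "0 < \<epsilon>" "\<epsilon> \<le> z t $ 1"
  defines "h \<equiv> \<epsilon> / (2 * (E_drop_rate + 1))"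
  shows "V (z (t + h)) + (\<nu>E + \<delta>E) * \<epsilon> * h \<le> V (z t)"
proof -
  have h: "0 < h" "E_drop_rate * h \<le> \<epsilon> / 2"
    using \<epsilon> E_drop_rate_nonneg by (simp_all add: h_def field_simps)
  have "\<epsilon> / 2 \<le> z \<tau> $ 1" if "\<tau> \<in> {t..t + h}" for \<tau>
  proof -
    have "E_drop_rate * (\<tau> - t) \<le> E_drop_rate * h"
      using that E_drop_rate_nonneg by (intro mult_left_mono) auto
    then show ?thesis using E_drop[of t \<tau>] that t \<epsilon>(2) h(2) by auto
  qed
  then have "V (z (t + h)) + 2 * (\<nu>E + \<delta>E) * (\<epsilon> / 2) * (t + h - t) \<le> V (z t)"
    using t h by (intro V_decrease) auto
  then show ?thesis by (simp add: algebra_simps)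
qed

text \<open>Since \<open>V\<close> decreases along the solution and is bounded below, its total decrease is finite,
  whereas each time the egg density exceeds \<open>\<epsilon>\<close> the decrease is at least a fixed amount.\<close>
lemma E_tendsto_zero: "((\<lambda>t. z t $ 1) \<longlongrightarrow> 0) at_top"
proof (rule ccontr)
  assume "\<not> ((\<lambda>t. z t $ 1) \<longlongrightarrow> 0) at_top"
  then obtain \<epsilon> where \<epsilon>: "\<epsilon> > 0" and not_ev: "\<not> eventually (\<lambda>t. dist (z t $ 1) 0 < \<epsilon>) at_top"
    unfolding tendsto_iff by blast
  have often: "\<exists>t\<ge>T. \<epsilon> \<le> z t $ 1" if "T \<ge> 0" for T
  proof -
    obtain t where "t \<ge> T" "\<not> dist (z t $ 1) 0 < \<epsilon>"
      using not_ev unfolding eventually_at_top_linorder by blast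
    then show ?thesis using z_nonneg[of t 1] that by (intro exI[of _ t]) (auto simp: dist_real_def)
  qed
  define h where "h = \<epsilon> / (2 * (E_drop_rate + 1))"
  define \<Delta> where "\<Delta> = (\<nu>E + \<delta>E) * \<epsilon> * h"
  have "\<Delta> > 0" using \<epsilon> E_drop_rate_nonneg params_pos by (simp add: \<Delta>_def h_def)
  define L where "L = Inf ((\<lambda>t. V (z t)) ` {0..})"
  have bdd: "bdd_below ((\<lambda>t. V (z t)) ` {0..})"
    using V_nonneg[OF z_in_Dprime] by (auto simp: bdd_below_def)
  have L_le: "L \<le> V (z s)" if "s \<ge> 0" for s
    unfolding L_def using that bdd by (intro cInf_lower) auto
  have "L < L + \<Delta>" using \<open>\<Delta> > 0\<close> by simp
  then obtain T where T: "T \<ge> 0" "V (z T) < L + \<Delta>"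
    unfolding L_def by (subst (asm) cInf_less_iff[OF _ bdd]) auto
  obtain t where t: "t \<ge> T" "\<epsilon> \<le> z t $ 1" using often[OF T(1)] by blast
  have "V (z (t + h)) + \<Delta> \<le> V (z t)"
    unfolding \<Delta>_def h_def using t T \<epsilon> by (intro V_drop_if_E_large) auto
  also have "V (z t) \<le> V (z T)" using V_antimono t T by simp
  finally have "V (z (t + h)) < L" using T(2) by simp
  moreover have "0 \<le> t + h" using t T \<epsilon> E_drop_rate_nonneg by (simp add: h_def)
  ultimately show False using L_le by fastforce
qed

lemma tendsto_zero: "(z \<longlongrightarrow> 0) at_top"
proof -
  have E: "((\<lambda>t. z t $ 1) \<longlongrightarrow> 0) at_top" by (rule E_tendsto_zero)
  have M: "((\<lambda>t. z t $ 2) \<longlongrightarrow> 0) at_top"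
    by (rule component_tendsto_zero[where g = "\<lambda>\<tau>. (1 - \<nu>) * \<nu>E * z \<tau> $ 1", OF \<delta>M_pos])
      (simp_all add: X_nth_2 tendsto_mult_right_zero E)
  have F: "((\<lambda>t. z t $ 3) \<longlongrightarrow> 0) at_top"
    by (rule component_tendsto_zero[where g = "\<lambda>\<tau>. \<nu> * \<nu>E * z \<tau> $ 1", OF \<delta>F_pos])
      (simp_all add: X_nth_3_le z_in_Dprime tendsto_mult_right_zero E)
  have Ms: "((\<lambda>t. z t $ 4) \<longlongrightarrow> 0) at_top"
    by (rule component_tendsto_zero[where g = "\<lambda>\<tau>. Cms * (z \<tau> $ 1 + z \<tau> $ 2)", OF dms_pos])
      (simp_all add: X_nth_4_le z_in_Dprime tendsto_mult_right_zero tendsto_add_zero E M)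
  have "((\<lambda>t. norm (z t)) \<longlongrightarrow> 0) at_top"
  proof (rule Lim_null_comparison)
    show "eventually (\<lambda>t. norm (norm (z t)) \<le> z t $ 1 + z t $ 2 + z t $ 3 + z t $ 4) at_top"
      using eventually_ge_at_top[of "0::real"]
      by eventually_elim (simp add: norm_le_sum_Dprime z_in_Dprime)
    show "((\<lambda>t. z t $ 1 + z t $ 2 + z t $ 3 + z t $ 4) \<longlongrightarrow> 0) at_top"
      using E M F Ms by (intro tendsto_add_zero)
  qed
  then show ?thesis by (simp add: tendsto_norm_zero_iff)
qed

end

context sterile_insect_control
begin

lemma filippov_GAS_Dprime: "filippov_GAS Dprime X Dprime"
  unfolding filippov_GAS_def
proof (intro conjI allI impI)
  fix \<epsilon> :: real assume \<epsilon>: "\<epsilon> > 0"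
  show "\<exists>\<delta>>0. \<forall>z. filippov_solution Dprime X z \<and> z 0 \<in> Dprime \<and> norm (z 0) < \<delta> \<longrightarrow>
      (\<forall>t>0. norm (z t) < \<epsilon>)"
  proof (intro exI[of _ "\<epsilon> / kstab"] conjI allI impI)
    show "\<epsilon> / kstab > 0" using \<epsilon> kstab_pos by simp
    fix z and t :: real assume z: "filippov_solution Dprime X z \<and> z 0 \<in> Dprime \<and> norm (z 0) < \<epsilon> / kstab"
      and "t > 0"
    interpret sterile_insect_solution \<beta>E \<nu>E \<delta>E \<delta>M \<delta>F \<delta>s K \<nu> \<gamma>s \<theta> \<alpha> \<beta>s z
      using z by unfold_locales blast
    have "norm (z t) \<le> kstab * norm (z 0)" using norm_le_kstab \<open>t > 0\<close> by simp
    also have "\<dots> < \<epsilon>" using z kstab_pos by (simp add: field_simps)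
    finally show "norm (z t) < \<epsilon>" .
  qed
next
  fix z assume "filippov_solution Dprime X z \<and> z 0 \<in> Dprime"
  then interpret sterile_insect_solution \<beta>E \<nu>E \<delta>E \<delta>M \<delta>F \<delta>s K \<nu> \<gamma>s \<theta> \<alpha> \<beta>s z
    by unfold_locales blast
  show "(z \<longlongrightarrow> 0) at_top" by (rule tendsto_zero)
qed

end

theorem theorem4:
  fixes \<beta>E \<nu>E \<delta>E \<delta>M \<delta>F \<delta>s K \<nu> \<gamma>s \<theta> \<alpha> \<beta>s :: real
  assumes "\<beta>E > 0" "\<nu>E > 0" "\<delta>E > 0" "\<delta>M > 0" "\<delta>F > 0" "\<delta>s > 0" "K > 0"
    and "0 < \<nu>" "\<nu> < 1" and "0 < \<gamma>s" "\<gamma>s \<le> 1"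
    and "\<delta>s \<ge> \<delta>M"
    and "\<theta> > 0" "Rtheta \<beta>E \<nu> \<nu>E \<delta>E \<delta>F \<gamma>s \<theta> < 1"
    and "\<alpha> > 0" "\<beta>s > 0"
  shows "filippov_GAS Dprime (Xcl \<beta>E \<nu>E \<delta>E \<delta>M \<delta>F \<delta>s K \<nu> \<gamma>s \<theta> \<alpha> \<beta>s) Dprime"
proof -
  interpret sterile_insect_control \<beta>E \<nu>E \<delta>E \<delta>M \<delta>F \<delta>s K \<nu> \<gamma>s \<theta> \<alpha> \<beta>s
    by unfold_locales (use assms in auto)
  show ?thesis by (rule filippov_GAS_Dprime)
qed

end
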